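(* For every $q\in\mathbb{K}$, $\mathbf{PQSym}^*(q)=(\mathbf{PQSym}^*,\prec_q,\cdot_q,\succ_q)$ is a $q$-tridendriform algebra, and equipped with the coproduct $\Delta$ it is a $q$-tridendriform bialgebra.
   Context: Words: a map $h:[n]\to\mathbb{Z}_{>0}$ is identified with $(h(1),\dots,h(n))$; $\max(h)$ its largest value; $hk$ concatenation; $\cap(h,k)=|\mathrm{Im}(h)\cap\mathrm{Im}(k)|$. A map $f^\uparrow:[n]\to[n]$ is a non-decreasing parking function if it is non-decreasing and $f^\uparrow(i)\le i$ for all $i$; an $n$-parking function is a composite $f=f^\uparrow\circ\sigma$ with $f^\uparrow$ a non-decreasing parking function and $\sigma\in S_n$. $PF_n$ denotes the set of $n$-parking functions and $\mathbf{PQSym}^*=\bigoplus_{n\ge1}\mathbb{K}[PF_n]$. Parkization: for a non-decreasing word $f^\uparrow$ of length $n$, $\mathrm{Park}(f^\uparrow)(1)=1$ and $\mathrm{Park}(f^\uparrow)(j)=\min\{\mathrm{Park}(f^\uparrow)(j-1)+f^\uparrow(j)-f^\uparrow(j-1),\ j\}$ for $j>1$; for an arbitrary word $f=f^\uparrow\circ\sigma$ with $f^\uparrow$ non-decreasing and $\sigma$ a permutation, $\mathrm{Park}(f)=\mathrm{Park}(f^\uparrow)\circ\sigma$. Products: for $f,g$ parking functions, $f\prec_qg=\sum_{\max(h)>\max(k)}q^{\cap(h,k)}hk$, $f\cdot_qg=\sum_{\max(h)=\max(k)}q^{\cap(h,k)-1}hk$, $f\succ_qg=\sum_{\max(h)<\max(k)}q^{\cap(h,k)}hk$,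 sums over pairs of words $(h,k)$ with $hk$ a parking function, $\mathrm{Park}(h)=f$, $\mathrm{Park}(k)=g$. Coproduct: $f\times_Pg:=(f(1),\dots,f(n),g(1)+n,\dots,g(m)+n)$ for $f\in PF_n$, $g\in PF_m$. On $\mathbf{PQSym}^*_+=\mathbf{PQSym}^*\oplus\mathbb{K}1$, $\Delta(1)=1\otimes1$ and for $f\in PF_n$, $\Delta(f)=\sum_jf^j_{(1)}\otimes f^j_{(2)}$, the sum over all $0\le j\le n$ for which there exist $f^j_{(1)}\in PF_j$, $f^j_{(2)}\in PF_{n-j}$ and a permutation $\delta_j\in S_n$ whose inverse is a $(j,n-j)$-shuffle (i.e. $\delta_j^{-1}$ is increasing on $\{1,\dots,j\}$ and on $\{j+1,\dots,n\}$) with $f=(f^j_{(1)}\times_Pf^j_{(2)})\circ\delta_j$ (these are unique when they exist; $PF_0=\{1\}$). $q$-tridendriform algebra: bilinear $\prec,\cdot,\succ$ satisfying (1) $(a\prec b)\prec c=a\prec(b\prec c+b\succ c+q\,b\cdot c)$; (2) $(a\succ b)\prec c=a\succ(b\prec c)$; (3) $(a\prec b+a\succ b+q\,a\cdot b)\succ c=a\succ(b\succ c)$; (4) $(a\cdot b)\cdot c=a\cdot(b\cdot c)$; (5) $(a\succ b)\cdot c=a\succ(b\cdot c)$; (6) $(a\prec b)\cdot c=a\cdot(b\succ c)$; (7) $(a\cdot b)\prec c=a\cdot(b\prec c)$; $*=\prec+q\,\cdot+\succ$. $q$-tridendriform bialgebra: with unit conventions $x\succ1=x\cdot1=1\cdot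 x=1\prec x=0$, $1\succ x=x=x\prec1$, $1*x=x*1=x$, $(x*y)\otimes(1\circ1):=(x\circ y)\otimes1$, a linear $\Delta:H_+\to H_+\otimes H_+$ with $\Delta(1)=1\otimes1$, counit conditions, and $\Delta(x\circ y)=\sum(x_{(1)}*y_{(1)})\otimes(x_{(2)}\circ y_{(2)})$ for $\circ\in\{\succ,\cdot,\prec\}$. *)

theory Defs
  imports "HOL-Library.Poly_Mapping" "HOL-Combinatorics.Permutations"
begin

(* Words h : [n] -> Z_{>0} are nat lists; position i (1-based in the paper) is
   index i-1 of the list; values are kept as in the paper (positive). *)

definition nd_pf :: "nat list \<Rightarrow> bool" where
  "nd_pf f \<longleftrightarrow> sorted f \<and> (\<forall>i<length f. 1 \<le> f ! i \<and> f ! i \<le> Suc i)"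

definition is_pf :: "nat list \<Rightarrow> bool" where
  "is_pf f \<longleftrightarrow> (\<exists>fu \<sigma>. nd_pf fu \<and> length fu = length f \<and> \<sigma> permutes {..<length f} \<and>
                    (\<forall>i<length f. f ! i = fu ! (\<sigma> i)))"

(* pu f j = Park(f_up)(j+1), 0-based index j *)
fun pu :: "nat list \<Rightarrow> nat \<Rightarrow> nat" where
  "pu f 0 = 1"
| "pu f (Suc j) = min (pu f j + f ! (Suc j) - f ! j) (Suc (Suc j))"

definition park_up :: "nat list \<Rightarrow> nat list" where
  "park_up f = map (pu f) [0..<length f]"

definition park :: "nat list \<Rightarrow> nat list" where
  "park f = (let fu = sort f;
                 \<sigma> = (SOME \<sigma>. \<sigma> permutes {..<length f} \<and> (\<forall>i<length f. f ! i = fu ! (\<sigma> i)))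
             in map (\<lambda>i. park_up fu ! (\<sigma> i)) [0..<length f])"

definition smult_pm :: "'a::semiring_0 \<Rightarrow> ('k \<Rightarrow>\<^sub>0 'a) \<Rightarrow> ('k \<Rightarrow>\<^sub>0 'a)" where
  "smult_pm c x = Poly_Mapping.map (\<lambda>v. c * v) x"

definition PQS :: "(nat list \<Rightarrow>\<^sub>0 'a::zero) set" where
  "PQS = {x. Poly_Mapping.keys x \<subseteq> {f. is_pf f \<and> f \<noteq> []}}"

(* PQSym^*_+ = PQSym^* + K 1, the unit 1 being the empty parking function (PF_0) *)
definition PQSplus :: "(nat list \<Rightarrow>\<^sub>0 'a::zero) set" where
  "PQSplus = {x. Poly_Mapping.keys x \<subseteq> {f. is_pf f}}"

(* H_+ (x) H_+ : finitely supported functions on pairs of basis elements *)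
definition TensPlus :: "(nat list \<times> nat list \<Rightarrow>\<^sub>0 'a::zero) set" where
  "TensPlus = {t. Poly_Mapping.keys t \<subseteq> {(f,g). is_pf f \<and> is_pf g}}"

definition bilin :: "(nat list \<Rightarrow> nat list \<Rightarrow> ('k \<Rightarrow>\<^sub>0 'a::comm_ring_1))
     \<Rightarrow> (nat list \<Rightarrow>\<^sub>0 'a) \<Rightarrow> (nat list \<Rightarrow>\<^sub>0 'a) \<Rightarrow> ('k \<Rightarrow>\<^sub>0 'a)" where
  "bilin B x y = (\<Sum>f\<in>Poly_Mapping.keys x. \<Sum>g\<in>Poly_Mapping.keys y.
                    smult_pm (Poly_Mapping.lookup x f * Poly_Mapping.lookup y g) (B f g))"

definition tens :: "(nat list \<Rightarrow>\<^sub>0 'a::comm_ring_1) \<Rightarrow> (nat list \<Rightarrow>\<^sub>0 'a) \<Rightarrow> (nat list \<times> nat list \<Rightarrow>\<^sub>0 'a)" where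
  "tens u v = bilin (\<lambda>s t. Poly_Mapping.single (s, t) 1) u v"

definition park_pairs :: "(nat \<Rightarrow> nat \<Rightarrow> bool) \<Rightarrow> nat list \<Rightarrow> nat list \<Rightarrow> (nat list \<times> nat list) set" where
  "park_pairs R f g = {(h, k). is_pf (h @ k) \<and> park h = f \<and> park k = g \<and> R (Max (set h)) (Max (set k))}"

definition cap :: "nat list \<Rightarrow> nat list \<Rightarrow> nat" where
  "cap h k = card (set h \<inter> set k)"

definition prec_b :: "'a::comm_ring_1 \<Rightarrow> nat list \<Rightarrow> nat list \<Rightarrow> (nat list \<Rightarrow>\<^sub>0 'a)" where
  "prec_b q f g = (\<Sum>(h, k)\<in>park_pairs (\<lambda>a b. a > b) f g.
                     smult_pm (q ^ cap h k) (Poly_Mapping.single (h @ k) 1))"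

definition dot_b :: "'a::comm_ring_1 \<Rightarrow> nat list \<Rightarrow> nat list \<Rightarrow> (nat list \<Rightarrow>\<^sub>0 'a)" where
  "dot_b q f g = (\<Sum>(h, k)\<in>park_pairs (\<lambda>a b. a = b) f g.
                     smult_pm (q ^ (cap h k - 1)) (Poly_Mapping.single (h @ k) 1))"

definition succ_b :: "'a::comm_ring_1 \<Rightarrow> nat list \<Rightarrow> nat list \<Rightarrow> (nat list \<Rightarrow>\<^sub>0 'a)" where
  "succ_b q f g = (\<Sum>(h, k)\<in>park_pairs (\<lambda>a b. a < b) f g.
                     smult_pm (q ^ cap h k) (Poly_Mapping.single (h @ k) 1))"

definition Prec :: "'a::comm_ring_1 \<Rightarrow> (nat list \<Rightarrow>\<^sub>0 'a) \<Rightarrow> (nat list \<Rightarrow>\<^sub>0 'a) \<Rightarrow> (nat list \<Rightarrow>\<^sub>0 'a)" where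
  "Prec q = bilin (prec_b q)"
definition Dot :: "'a::comm_ring_1 \<Rightarrow> (nat list \<Rightarrow>\<^sub>0 'a) \<Rightarrow> (nat list \<Rightarrow>\<^sub>0 'a) \<Rightarrow> (nat list \<Rightarrow>\<^sub>0 'a)" where
  "Dot q = bilin (dot_b q)"
definition Succ :: "'a::comm_ring_1 \<Rightarrow> (nat list \<Rightarrow>\<^sub>0 'a) \<Rightarrow> (nat list \<Rightarrow>\<^sub>0 'a) \<Rightarrow> (nat list \<Rightarrow>\<^sub>0 'a)" where
  "Succ q = bilin (succ_b q)"

definition q_tridendriform :: "'a::comm_ring_1 \<Rightarrow> (nat list \<Rightarrow>\<^sub>0 'a) set
   \<Rightarrow> ((nat list \<Rightarrow>\<^sub>0 'a) \<Rightarrow> (nat list \<Rightarrow>\<^sub>0 'a) \<Rightarrow> (nat list \<Rightarrow>\<^sub>0 'a))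
   \<Rightarrow> ((nat list \<Rightarrow>\<^sub>0 'a) \<Rightarrow> (nat list \<Rightarrow>\<^sub>0 'a) \<Rightarrow> (nat list \<Rightarrow>\<^sub>0 'a))
   \<Rightarrow> ((nat list \<Rightarrow>\<^sub>0 'a) \<Rightarrow> (nat list \<Rightarrow>\<^sub>0 'a) \<Rightarrow> (nat list \<Rightarrow>\<^sub>0 'a)) \<Rightarrow> bool" where
  "q_tridendriform q A pr dt sc \<longleftrightarrow>
     (\<forall>a\<in>A. \<forall>b\<in>A. pr a b \<in> A \<and> dt a b \<in> A \<and> sc a b \<in> A) \<and>
     (\<forall>a\<in>A. \<forall>b\<in>A. \<forall>c\<in>A.
        pr (pr a b) c = pr a (pr b c + sc b c + smult_pm q (dt b c)) \<and>
        pr (sc a b) c = sc a (pr b c) \<and>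
        sc (pr a b + sc a b + smult_pm q (dt a b)) c = sc a (sc b c) \<and>
        dt (dt a b) c = dt a (dt b c) \<and>
        dt (sc a b) c = sc a (dt b c) \<and>
        dt (pr a b) c = dt a (sc b c) \<and>
        pr (dt a b) c = dt a (pr b c))"

definition times_P :: "nat list \<Rightarrow> nat list \<Rightarrow> nat list" where
  "times_P f g = f @ map (\<lambda>x. x + length f) g"

definition cop_terms :: "nat list \<Rightarrow> (nat list \<times> nat list) set" where
  "cop_terms f = {(f1, f2). is_pf f1 \<and> is_pf f2 \<and> length f1 + length f2 = length f \<and>
      (\<exists>\<delta>. \<delta> permutes {..<length f} \<and>
           strict_mono_on {..<length f1} (inv \<delta>) \<and>
           strict_mono_on {length f1..<length f} (inv \<delta>) \<and>
           (\<forall>i<length f. f ! i = times_P f1 f2 ! (\<delta> i)))}"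

definition cop_b :: "nat list \<Rightarrow> (nat list \<times> nat list \<Rightarrow>\<^sub>0 'a::comm_ring_1)" where
  "cop_b f = (if f = [] then Poly_Mapping.single ([], []) 1
              else (\<Sum>p\<in>cop_terms f. Poly_Mapping.single p 1))"

definition Cop :: "(nat list \<Rightarrow>\<^sub>0 'a::comm_ring_1) \<Rightarrow> (nat list \<times> nat list \<Rightarrow>\<^sub>0 'a)" where
  "Cop x = (\<Sum>f\<in>Poly_Mapping.keys x. smult_pm (Poly_Mapping.lookup x f) (cop_b f))"

definition counit :: "(nat list \<Rightarrow>\<^sub>0 'a::comm_ring_1) \<Rightarrow> 'a" where
  "counit x = Poly_Mapping.lookup x []"

(* (counit (x) id) and (id (x) counit), identifying K (x) H = H = H (x) K *)
definition counit_id :: "(nat list \<times> nat list \<Rightarrow>\<^sub>0 'a::comm_ring_1) \<Rightarrow> (nat list \<Rightarrow>\<^sub>0 'a)" where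
  "counit_id t = (\<Sum>p\<in>Poly_Mapping.keys t.
       smult_pm (Poly_Mapping.lookup t p * counit (Poly_Mapping.single (fst p) 1))
                (Poly_Mapping.single (snd p) 1))"

definition id_counit :: "(nat list \<times> nat list \<Rightarrow>\<^sub>0 'a::comm_ring_1) \<Rightarrow> (nat list \<Rightarrow>\<^sub>0 'a)" where
  "id_counit t = (\<Sum>p\<in>Poly_Mapping.keys t.
       smult_pm (Poly_Mapping.lookup t p * counit (Poly_Mapping.single (snd p) 1))
                (Poly_Mapping.single (fst p) 1))"

(* [] is the unit 1 *)
definition ext_prec :: "'a::comm_ring_1 \<Rightarrow> nat list \<Rightarrow> nat list \<Rightarrow> (nat list \<Rightarrow>\<^sub>0 'a)" where
  "ext_prec q a c = (if c = [] then Poly_Mapping.single a 1 else if a = [] then 0 else prec_b q a c)"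

definition ext_succ :: "'a::comm_ring_1 \<Rightarrow> nat list \<Rightarrow> nat list \<Rightarrow> (nat list \<Rightarrow>\<^sub>0 'a)" where
  "ext_succ q a c = (if a = [] then Poly_Mapping.single c 1 else if c = [] then 0 else succ_b q a c)"

definition ext_dot :: "'a::comm_ring_1 \<Rightarrow> nat list \<Rightarrow> nat list \<Rightarrow> (nat list \<Rightarrow>\<^sub>0 'a)" where
  "ext_dot q a c = (if a = [] \<or> c = [] then 0 else dot_b q a c)"

definition ext_star :: "'a::comm_ring_1 \<Rightarrow> nat list \<Rightarrow> nat list \<Rightarrow> (nat list \<Rightarrow>\<^sub>0 'a)" where
  "ext_star q a c = (if a = [] then Poly_Mapping.single c 1
                     else if c = [] then Poly_Mapping.single a 1
                     else prec_b q a c + smult_pm q (dot_b q a c) + succ_b q a c)"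

(* (a (x) b) , (c (x) d)  |->  (a * c) (x) (b o d), with (x*y) (x) (1 o 1) := (x o y) (x) 1 *)
definition compat_b :: "'a::comm_ring_1 \<Rightarrow> (nat list \<Rightarrow> nat list \<Rightarrow> (nat list \<Rightarrow>\<^sub>0 'a))
     \<Rightarrow> nat list \<times> nat list \<Rightarrow> nat list \<times> nat list \<Rightarrow> (nat list \<times> nat list \<Rightarrow>\<^sub>0 'a)" where
  "compat_b q op p r = (if snd p = [] \<and> snd r = []
       then tens (op (fst p) (fst r)) (Poly_Mapping.single [] 1)
       else tens (ext_star q (fst p) (fst r)) (op (snd p) (snd r)))"

definition bilinT :: "(nat list \<times> nat list \<Rightarrow> nat list \<times> nat list \<Rightarrow> (nat list \<times> nat list \<Rightarrow>\<^sub>0 'a::comm_ring_1))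
     \<Rightarrow> (nat list \<times> nat list \<Rightarrow>\<^sub>0 'a) \<Rightarrow> (nat list \<times> nat list \<Rightarrow>\<^sub>0 'a) \<Rightarrow> (nat list \<times> nat list \<Rightarrow>\<^sub>0 'a)" where
  "bilinT B s t = (\<Sum>p\<in>Poly_Mapping.keys s. \<Sum>r\<in>Poly_Mapping.keys t.
                     smult_pm (Poly_Mapping.lookup s p * Poly_Mapping.lookup t r) (B p r))"

definition q_tridendriform_bialgebra :: "'a::comm_ring_1 \<Rightarrow> bool" where
  "q_tridendriform_bialgebra q \<longleftrightarrow>
     q_tridendriform q PQS (Prec q) (Dot q) (Succ q) \<and>
     (\<forall>x\<in>(PQSplus :: (nat list \<Rightarrow>\<^sub>0 'a) set). Cop x \<in> (TensPlus :: (nat list \<times> nat list \<Rightarrow>\<^sub>0 'a) set)) \<and>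
     Cop (Poly_Mapping.single [] 1) = Poly_Mapping.single ([], []) (1::'a) \<and>
     (\<forall>x\<in>(PQSplus :: (nat list \<Rightarrow>\<^sub>0 'a) set). counit_id (Cop x) = x \<and> id_counit (Cop x) = x) \<and>
     (\<forall>x\<in>PQS. \<forall>y\<in>PQS.
        Cop (Succ q x y) = bilinT (compat_b q (ext_succ q)) (Cop x) (Cop y) \<and>
        Cop (Dot q x y) = bilinT (compat_b q (ext_dot q)) (Cop x) (Cop y) \<and>
        Cop (Prec q x y) = bilinT (compat_b q (ext_prec q)) (Cop x) (Cop y))"

end

theory Submission
  imports Defs
begin

(* 1. Parkization in closed form: Park u = map (parkval u) u with parkval u v the minimum over
      entries a <= v of #{entries < a} + 1 + v - a.  Hence parkization commutes with taking
      sub-multisets, prefixes and suffixes, and w is a parking function iff every entry a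
      satisfies 1 <= a <= 1 + #{entries below a}.
   2. Each product has a "cut expansion": the coefficient of w is a sum over the cut positions
      of w, with a weight depending only on the maxima and common values of the two halves.
      Each axiom then reduces to an identity of weights (inclusion-exclusion on common values).
   3. The terms of Delta f are the cuts of f at its "cut points" j (values <= j / values > j).
      For a basis pair (u, v), recording the lengths of the low parts is a bijection from the
      terms of f o g cut into (u, v) onto the pairs of cut points contributing to
      Delta f o Delta g; this gives the compatibility with the three products. *)

section \<open>Parkization in closed form\<close>

definition nless :: "nat list \<Rightarrow> nat \<Rightarrow> nat" where
  "nless u a = length (filter (\<lambda>x. x < a) u)"

definition parkval :: "nat list \<Rightarrow> nat \<Rightarrow> nat" where
  "parkval u v = Min ((\<lambda>a. nless u a + 1 + v - a) ` {a \<in> set u. a \<le> v})"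

lemma nless_mset: "mset u = mset u' \<Longrightarrow> nless u = nless u'"
  unfolding nless_def by (metis mset_filter size_mset)

lemma parkval_mset: "mset u = mset u' \<Longrightarrow> parkval u = parkval u'"
proof -
  assume m: "mset u = mset u'"
  then have "set u = set u'" by (rule mset_eq_setD)
  with nless_mset[OF m] show ?thesis unfolding parkval_def by simp
qed

lemma parkval_le: "a \<in> set u \<Longrightarrow> a \<le> v \<Longrightarrow> parkval u v \<le> nless u a + 1 + v - a"
  unfolding parkval_def by (rule Min_le) auto

lemma parkval_attained: assumes "a \<in> set u" "a \<le> v"
  obtains b where "b \<in> set u" "b \<le> v" "parkval u v = nless u b + 1 + v - b"
proof -
  have "parkval u v \<in> (\<lambda>a. nless u a + 1 + v - a) ` {a \<in> set u. a \<le> v}"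
    unfolding parkval_def by (rule Min_in) (use assms in auto)
  thus ?thesis using that by auto
qed

lemma nless_card: "nless u a = card {i. i < length u \<and> u ! i < a}"
  unfolding nless_def by (simp add: length_filter_conv_card)

lemma nless_split: "a \<le> b \<Longrightarrow> nless u b = nless u a + length (filter (\<lambda>y. a \<le> y \<and> y < b) u)"
  unfolding nless_def by (induction u) auto

lemma nless_strict: assumes "a \<in> set u" "a < b" shows "nless u a < nless u b"
proof -
  have "a \<in> set (filter (\<lambda>y. a \<le> y \<and> y < b) u)" using assms by simp
  then have "0 < length (filter (\<lambda>y. a \<le> y \<and> y < b) u)" by (rule length_pos_if_in_set)
  then show ?thesis using nless_split[of a b u] assms(2) by simp
qed

lemma nless_less_length: "a \<in> set u \<Longrightarrow> nless u a < length u"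
  unfolding nless_def by (rule length_filter_less) auto

text \<open>Between two consecutive values w < v of u, parkval either jumps by v - w or is reset
  to 1 + #(entries below v); this is the recursion defining the parkization of sorted words.\<close>
lemma parkval_consecutive:
  assumes w: "w \<in> set u" and v: "v \<in> set u" and wv: "w < v"
    and gap: "\<forall>a\<in>set u. a \<le> w \<or> v \<le> a"
  shows "parkval u v = min (Suc (nless u v)) (parkval u w + (v - w))"
proof -
  let ?S = "{a \<in> set u. a \<le> w}"
  have A: "{a \<in> set u. a \<le> v} = insert v ?S" using gap v wv by auto
  have fin: "finite ?S" and ne: "?S \<noteq> {}" using w by auto
  have B: "(\<lambda>a. nless u a + 1 + v - a) ` ?S = (\<lambda>x. x + (v - w)) ` ((\<lambda>a. nless u a + 1 + w - a) ` ?S)"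
    using wv by (force simp: image_image)
  have C: "Min ((\<lambda>x. x + (v - w)) ` ((\<lambda>a. nless u a + 1 + w - a) ` ?S)) = parkval u w + (v - w)"
    unfolding parkval_def by (rule mono_Min_commute[symmetric]) (use fin ne in \<open>auto simp: mono_def\<close>)
  have "parkval u v = min (nless u v + 1 + v - v) (Min ((\<lambda>a. nless u a + 1 + v - a) ` ?S))"
    unfolding parkval_def A image_insert by (rule Min_insert) (use fin ne in auto)
  then show ?thesis unfolding B C by simp
qed

lemma pu_le_Suc: "pu s k \<le> Suc k"
  by (cases k) (auto simp: min.coboundedI2)

lemma nless_sorted_nth:
  assumes "sorted s" "Suc k < length s" "s ! k < s ! Suc k"
  shows "nless s (s ! Suc k) = Suc k"
proof -
  have "{i. i < length s \<and> s ! i < s ! Suc k} = {..k}"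
  proof (intro set_eqI iffI)
    fix i assume "i \<in> {i. i < length s \<and> s ! i < s ! Suc k}"
    then show "i \<in> {..k}" using assms sorted_nth_mono[of s "Suc k" i]
      by (cases "i \<le> k") auto
  next
    fix i assume "i \<in> {..k}"
    then show "i \<in> {i. i < length s \<and> s ! i < s ! Suc k}"
      using assms sorted_nth_mono[of s i k] by auto
  qed
  then show ?thesis unfolding nless_card by simp
qed

lemma pu_eq_parkval: assumes "sorted s" "k < length s" shows "pu s k = parkval s (s ! k)"
  using assms(2)
proof (induction k)
  case 0
  have A: "{a \<in> set s. a \<le> s ! 0} = {s ! 0}"
    using assms(1) 0 by (auto simp: in_set_conv_nth intro: antisym sorted_nth_mono)
  have "nless s (s ! 0) = 0" unfolding nless_def using assms(1) 0
    by (auto simp: filter_empty_conv in_set_conv_nth not_less intro: sorted_nth_mono)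
  then show ?case unfolding parkval_def A by simp
next
  case (Suc k)
  have le: "s ! k \<le> s ! Suc k" using assms(1) Suc.prems by (simp add: sorted_nth_mono)
  show ?case
  proof (cases "s ! k = s ! Suc k")
    case True
    then show ?thesis using Suc pu_le_Suc[of s k] by (simp add: min_def)
  next
    case False
    then have lt: "s ! k < s ! Suc k" using le by simp
    have gap: "\<forall>a\<in>set s. a \<le> s ! k \<or> s ! Suc k \<le> a"
    proof
      fix a assume "a \<in> set s"
      then obtain i where "i < length s" "a = s ! i" by (auto simp: in_set_conv_nth)
      then show "a \<le> s ! k \<or> s ! Suc k \<le> a"
        using assms(1) sorted_nth_mono[of s i k] sorted_nth_mono[of s "Suc k" i] Suc.prems
        by (cases "i \<le> k") auto
    qed
    have "parkval s (s ! Suc k) = min (Suc (Suc k)) (parkval s (s ! k) + (s ! Suc k - s ! k))"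
      using parkval_consecutive[OF _ _ lt gap] nless_sorted_nth[OF assms(1) Suc.prems lt] Suc.prems
      by simp
    then show ?thesis using Suc lt by (simp add: min_def)
  qed
qed

lemma park_eq_map_parkval: "park u = map (parkval u) u"
proof -
  let ?s = "sort u"
  let ?P = "\<lambda>\<sigma>. \<sigma> permutes {..<length u} \<and> (\<forall>i<length u. u ! i = ?s ! (\<sigma> i))"
  obtain p where p: "p permutes {..<length ?s}" "permute_list p ?s = u"
    using mset_eq_permutation[of u ?s] by auto
  have "?P p" using p by (auto simp: permute_list_nth[symmetric])
  then have P: "?P (SOME \<sigma>. ?P \<sigma>)" by (rule someI[of ?P p])
  define \<sigma> where "\<sigma> = (SOME \<sigma>. ?P \<sigma>)"
  have sl: "\<And>i. i < length u \<Longrightarrow> \<sigma> i < length u"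
    using P unfolding \<sigma>_def by (meson lessThan_iff permutes_in_image)
  have ph: "parkval ?s = parkval u" by (rule parkval_mset) simp
  have "map (\<lambda>i. park_up ?s ! (\<sigma> i)) [0..<length u] = map (parkval u) u"
  proof (rule nth_equalityI)
    fix i assume "i < length (map (\<lambda>i. park_up ?s ! (\<sigma> i)) [0..<length u])"
    then have i: "i < length u" by simp
    have "park_up ?s ! (\<sigma> i) = pu ?s (\<sigma> i)" unfolding park_up_def using sl[OF i] by simp
    also have "\<dots> = parkval ?s (?s ! \<sigma> i)" by (rule pu_eq_parkval) (use sl[OF i] in auto)
    also have "?s ! \<sigma> i = u ! i" using P i unfolding \<sigma>_def by auto
    finally show "map (\<lambda>i. park_up ?s ! (\<sigma> i)) [0..<length u] ! i = map (parkval u) u ! i"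
      using i ph by simp
  qed simp
  then show ?thesis unfolding park_def Let_def \<sigma>_def .
qed

lemma length_filter_subseteq_mset: "mset x \<subseteq># mset u \<Longrightarrow> length (filter P x) \<le> length (filter P u)"
proof -
  assume "mset x \<subseteq># mset u"
  then have "size (filter_mset P (mset x)) \<le> size (filter_mset P (mset u))"
    by (intro size_mset_mono multiset_filter_mono)
  then show ?thesis by (simp flip: mset_filter)
qed

lemma parkval_ge1: "v \<in> set u \<Longrightarrow> 1 \<le> parkval u v"
  by (rule parkval_attained[of v u v]) auto

lemma parkval_le_nless: "v \<in> set u \<Longrightarrow> parkval u v \<le> Suc (nless u v)"
  using parkval_le[of v u v] by simp

lemma parkval_strict_mono: assumes "a \<in> set u" "b \<in> set u" "a < b" shows "parkval u a < parkval u b"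
proof -
  obtain c where c: "c \<in> set u" "c \<le> b" "parkval u b = nless u c + 1 + b - c"
    using parkval_attained[OF assms(2) order_refl] by blast
  show ?thesis
  proof (cases "c \<le> a")
    case True
    then show ?thesis using parkval_le[OF c(1) True] c assms by linarith
  next
    case False
    then have "nless u a < nless u c" using nless_strict assms(1) by auto
    then show ?thesis using parkval_le_nless[OF assms(1)] c by linarith
  qed
qed

lemma parkval_less_iff: "a \<in> set u \<Longrightarrow> b \<in> set u \<Longrightarrow> parkval u a < parkval u b \<longleftrightarrow> a < b"
  by (cases a b rule: linorder_cases) (auto dest: parkval_strict_mono)

lemma parkval_le_iff: "a \<in> set u \<Longrightarrow> b \<in> set u \<Longrightarrow> parkval u a \<le> parkval u b \<longleftrightarrow> a \<le> b"
  using parkval_less_iff[of b u a] by linarith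

lemma parkval_inj: "inj_on (parkval u) (set u)"
  by (rule inj_onI) (metis linorder_neqE_nat parkval_strict_mono less_irrefl)

lemma parkval_gap: assumes "a \<in> set u" "a \<le> b" shows "parkval u b \<le> parkval u a + (b - a)"
proof -
  obtain c where c: "c \<in> set u" "c \<le> a" "parkval u a = nless u c + 1 + a - c"
    using parkval_attained[OF assms(1) order_refl] by blast
  show ?thesis using parkval_le[of c u b] c assms by simp
qed

lemma parkval_le_threshold:
  assumes v: "v \<in> set u" and bv: "b \<le> v"
  shows "parkval u v \<le> nless u b + 1 + v - b"
proof -
  define B where "B = {y \<in> set u. b \<le> y}"
  have finB: "finite B" and vB: "v \<in> B" using v bv unfolding B_def by auto
  define b' where "b' = Min B"
  have b'B: "b' \<in> B" and b'v: "b' \<le> v" unfolding b'_def using Min_in Min_le finB vB by blast+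
  have "filter (\<lambda>y. b \<le> y \<and> y < b') u = []"
    using finB unfolding filter_empty_conv b'_def B_def by (auto simp: not_less)
  then have "nless u b' = nless u b" using b'B nless_split[of b b' u] unfolding B_def by simp
  then have "parkval u v \<le> nless u b + 1 + v - b'"
    using parkval_le[of b' u v] b'B b'v unfolding B_def by simp
  also have "\<dots> \<le> nless u b + 1 + v - b" using b'B b'v unfolding B_def by auto
  finally show ?thesis .
qed

lemma nless_map_parkval: assumes "set x \<subseteq> set u" "a \<in> set u"
  shows "nless (map (parkval u) x) (parkval u a) = nless x a"
  unfolding nless_def filter_map length_map o_def
  using assms by (intro arg_cong[where f=length] filter_cong) (auto simp: parkval_less_iff)

lemma set_subset_of_subseteq_mset: "mset x \<subseteq># mset u \<Longrightarrow> set x \<subseteq> set u"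
  using set_mset_mono by fastforce

lemma parkval_restrict_le:
  assumes sub: "mset x \<subseteq># mset u" and v: "v \<in> set x"
  shows "parkval (map (parkval u) x) (parkval u v) \<le> parkval x v"
proof -
  have sx: "set x \<subseteq> set u" using set_subset_of_subseteq_mset[OF sub] .
  have vu: "v \<in> set u" using v sx by auto
  obtain b where b: "b \<in> set x" "b \<le> v" "parkval x v = nless x b + 1 + v - b"
    using parkval_attained[OF v order_refl] by blast
  have bu: "b \<in> set u" using b sx by auto
  have "parkval (map (parkval u) x) (parkval u v) \<le> nless (map (parkval u) x) (parkval u b) + 1 + parkval u v - parkval u b"
    by (rule parkval_le) (use b bu vu parkval_le_iff in auto)
  also have "\<dots> = nless x b + 1 + parkval u v - parkval u b" using nless_map_parkval[OF sx bu] by simp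
  also have "\<dots> \<le> nless x b + 1 + v - b" using parkval_gap[OF bu b(2)] parkval_le_iff[OF bu vu] b by linarith
  finally show "parkval (map (parkval u) x) (parkval u v) \<le> parkval x v" using b by simp
qed

lemma parkval_restrict_ge:
  assumes sub: "mset x \<subseteq># mset u" and v: "v \<in> set x"
  shows "parkval x v \<le> parkval (map (parkval u) x) (parkval u v)"
proof -
  have sx: "set x \<subseteq> set u" using set_subset_of_subseteq_mset[OF sub] .
  have vu: "v \<in> set u" using v sx by auto
  have "parkval u v \<in> set (map (parkval u) x)" using v by simp
  then obtain a' where a': "a' \<in> set (map (parkval u) x)" "a' \<le> parkval u v"
    "parkval (map (parkval u) x) (parkval u v) = nless (map (parkval u) x) a' + 1 + parkval u v - a'"
    using parkval_attained by blast
  then obtain a where a: "a \<in> set x" "a' = parkval u a" by auto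
  have au: "a \<in> set u" using a sx by auto
  have av: "a \<le> v" using a' a parkval_le_iff[OF au vu] by simp
  have eq: "parkval (map (parkval u) x) (parkval u v) = nless x a + 1 + parkval u v - parkval u a"
    using a' a nless_map_parkval[OF sx au] by simp
  obtain b where b: "b \<in> set u" "b \<le> v" "parkval u v = nless u b + 1 + v - b"
    using parkval_attained[OF vu order_refl] by blast
  show ?thesis
  proof (cases "b \<le> a")
    case True
    have "parkval u a \<le> nless u b + 1 + a - b" by (rule parkval_le) (use b True in auto)
    then have "nless x a + 1 + v - a \<le> nless x a + 1 + parkval u v - parkval u a" using b av True by linarith
    moreover have "parkval x v \<le> nless x a + 1 + v - a" by (rule parkval_le) (use a av in auto)
    ultimately show ?thesis using eq by linarith
  next
    case False
    have "length (filter (\<lambda>y. a \<le> y \<and> y < b) x) \<le> length (filter (\<lambda>y. a \<le> y \<and> y < b) u)"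
      by (rule length_filter_subseteq_mset[OF sub])
    then have "nless x b + 1 + v - b \<le> nless x a + 1 + parkval u v - parkval u a"
      using parkval_le_nless[OF au] nless_split[of a b u] nless_split[of a b x] b False by linarith
    then show ?thesis using parkval_le_threshold[OF v b(2)] eq by linarith
  qed
qed

lemma parkval_restrict:
  "mset x \<subseteq># mset u \<Longrightarrow> v \<in> set x \<Longrightarrow> parkval (map (parkval u) x) (parkval u v) = parkval x v"
  by (intro antisym parkval_restrict_le parkval_restrict_ge)

lemma park_restrict: "mset x \<subseteq># mset u \<Longrightarrow> park (map (parkval u) x) = park x"
  unfolding park_eq_map_parkval by (auto simp: parkval_restrict)

lemma park_length[simp]: "length (park u) = length u"
  by (simp add: park_eq_map_parkval)

lemma park_Nil[simp]: "park [] = []"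
  by (simp add: park_eq_map_parkval)

lemma park_Nil_iff[simp]: "park u = [] \<longleftrightarrow> u = []"
  by (simp add: park_eq_map_parkval)

lemma park_take: "park (take m (park u)) = park (take m u)"
proof -
  have "take m (park u) = map (parkval u) (take m u)" by (simp add: park_eq_map_parkval take_map)
  moreover have "mset (take m u) \<subseteq># mset u" by (metis append_take_drop_id mset_append mset_subset_eq_add_left)
  ultimately show ?thesis by (simp add: park_restrict)
qed

lemma park_drop: "park (drop m (park u)) = park (drop m u)"
proof -
  have "drop m (park u) = map (parkval u) (drop m u)" by (simp add: park_eq_map_parkval drop_map)
  moreover have "mset (drop m u) \<subseteq># mset u" by (metis append_take_drop_id mset_append mset_subset_eq_add_right)
  ultimately show ?thesis by (simp add: park_restrict)
qed

section \<open>Parking functions by counting\<close>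

text \<open>A word is a parking function iff every entry a satisfies 1 \<le> a \<le> 1 + #(entries below a).
  This permutation-invariant description replaces the definition via sorting.\<close>
definition pf_count :: "nat list \<Rightarrow> bool" where
  "pf_count w \<longleftrightarrow> (\<forall>a\<in>set w. 1 \<le> a \<and> a \<le> Suc (nless w a))"

lemma pf_count_mset: "mset w = mset w' \<Longrightarrow> pf_count w = pf_count w'"
proof -
  assume m: "mset w = mset w'"
  then have "set w = set w'" by (rule mset_eq_setD)
  with nless_mset[OF m] show ?thesis unfolding pf_count_def by simp
qed
lemma pf_count_of_nd_pf: assumes s: "sorted s" and nd: "nd_pf s" shows "pf_count s"
  unfolding pf_count_def
proof
  fix a assume a: "a \<in> set s"
  then obtain i where i: "i < length s" "s ! i = a" by (auto simp: in_set_conv_nth)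
  let ?c = "nless s a"
  have c: "?c < length s" using nless_less_length[OF a] .
  have "a \<le> s ! ?c"
  proof (rule ccontr)
    assume "\<not> a \<le> s ! ?c"
    then have "{..?c} \<subseteq> {i. i < length s \<and> s ! i < a}"
      using s c by (auto intro: le_less_trans[OF sorted_nth_mono])
    then have "card {..?c} \<le> ?c" unfolding nless_card by (rule card_mono[rotated]) simp
    then show False by simp
  qed
  then have "a \<le> Suc ?c" using nd c unfolding nd_pf_def by (meson order_trans)
  moreover have "1 \<le> a" using nd i unfolding nd_pf_def by auto
  ultimately show "1 \<le> a \<and> a \<le> Suc (nless s a)" by simp
qed

lemma nd_pf_of_pf_count: assumes s: "sorted s" and p: "pf_count s" shows "nd_pf s"
proof -
  have "1 \<le> s ! i \<and> s ! i \<le> Suc i" if i: "i < length s" for i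
  proof -
    have "{j. j < length s \<and> s ! j < s ! i} \<subseteq> {..<i}"
      using s i by (auto simp: not_le[symmetric] dest: sorted_nth_mono[of s i])
    then have "nless s (s ! i) \<le> i" unfolding nless_card by (metis card_lessThan card_mono finite_lessThan)
    moreover have "s ! i \<in> set s" using i by simp
    ultimately show ?thesis using p unfolding pf_count_def by fastforce
  qed
  then show "nd_pf s" using s unfolding nd_pf_def by simp
qed

lemma is_pf_iff_pf_count: "is_pf w \<longleftrightarrow> pf_count w"
proof
  assume "is_pf w"
  then obtain fu \<sigma> where f: "nd_pf fu" "length fu = length w" "\<sigma> permutes {..<length w}"
     "\<forall>i<length w. w ! i = fu ! (\<sigma> i)" unfolding is_pf_def by blast
  have "w = permute_list \<sigma> fu" using f by (intro nth_equalityI) (auto simp: permute_list_nth)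
  then have m: "mset w = mset fu" using f by (simp add: mset_permute_list)
  have "sorted fu" using f unfolding nd_pf_def by simp
  then show "pf_count w" using f(1) pf_count_of_nd_pf pf_count_mset[OF m] by simp
next
  assume p: "pf_count w"
  let ?s = "sort w"
  obtain \<sigma> where s: "\<sigma> permutes {..<length ?s}" "permute_list \<sigma> ?s = w"
    using mset_eq_permutation[of w ?s] by auto
  have "pf_count ?s" using p pf_count_mset[of ?s w] by simp
  then have "nd_pf ?s" using nd_pf_of_pf_count by simp
  then show "is_pf w" unfolding is_pf_def
    using s by (intro exI[of _ ?s] exI[of _ \<sigma>]) (auto simp: permute_list_nth[symmetric])
qed

lemma pf_count_park: "pf_count (park u)"
  unfolding pf_count_def park_eq_map_parkval
proof
  fix b assume "b \<in> set (map (parkval u) u)"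
  then obtain a where a: "a \<in> set u" "b = parkval u a" by auto
  show "1 \<le> b \<and> b \<le> Suc (nless (map (parkval u) u) b)"
    using a parkval_ge1 parkval_le_nless nless_map_parkval[of u u a] by auto
qed

lemma is_pf_park: "is_pf (park u)"
  using pf_count_park is_pf_iff_pf_count by simp

lemma parkval_le_self: assumes "\<forall>y\<in>set H. 1 \<le> y" "b \<in> set H" shows "parkval H b \<le> b"
proof -
  define m where "m = Min (set H)"
  have m: "m \<in> set H" using assms(2) unfolding m_def by (intro Min_in) auto
  have "\<forall>y\<in>set H. m \<le> y" unfolding m_def by simp
  then have "nless H m = 0" "m \<le> b" using assms unfolding nless_def by (auto simp: filter_empty_conv not_less)
  moreover have "1 \<le> m" using assms(1) m by blast
  ultimately show ?thesis using parkval_le[of m H b] m by simp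
qed

lemma parkval_pf: assumes "pf_count w" "v \<in> set w" shows "parkval w v = v"
proof (rule antisym)
  obtain b where b: "b \<in> set w" "b \<le> v" "parkval w v = nless w b + 1 + v - b"
    using parkval_attained[OF assms(2) order_refl] by blast
  show "v \<le> parkval w v" using assms(1) b unfolding pf_count_def by force
  show "parkval w v \<le> v" using assms parkval_le_self unfolding pf_count_def by blast
qed

lemma park_pf: "is_pf w \<Longrightarrow> park w = w"
  unfolding is_pf_iff_pf_count park_eq_map_parkval by (simp add: map_idI parkval_pf)

lemma pf_count_le_length: "pf_count w \<Longrightarrow> a \<in> set w \<Longrightarrow> a \<le> length w"
  unfolding pf_count_def using nless_less_length by fastforce

section \<open>Products as sums over cut positions\<close>

lemma lookup_smult[simp]: "Poly_Mapping.lookup (smult_pm c x) k = c * Poly_Mapping.lookup x k"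
  unfolding smult_pm_def by (simp add: Poly_Mapping.map.rep_eq when_def)

lemma keys_smult: "Poly_Mapping.keys (smult_pm c x) \<subseteq> Poly_Mapping.keys x"
  by (auto simp: in_keys_iff)

lemma lookup_bilin: "Poly_Mapping.lookup (bilin B x y) w =
   (\<Sum>f\<in>Poly_Mapping.keys x. \<Sum>g\<in>Poly_Mapping.keys y.
       Poly_Mapping.lookup x f * Poly_Mapping.lookup y g * Poly_Mapping.lookup (B f g) w)"
  unfolding bilin_def by (simp add: lookup_sum)

definition park_sum :: "(nat \<Rightarrow> nat \<Rightarrow> bool) \<Rightarrow> (nat list \<Rightarrow> nat list \<Rightarrow> 'a::comm_ring_1) \<Rightarrow> nat list \<Rightarrow> nat list \<Rightarrow> (nat list \<Rightarrow>\<^sub>0 'a)" where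
  "park_sum R E f g = (\<Sum>(h, k)\<in>park_pairs R f g. smult_pm (E h k) (Poly_Mapping.single (h @ k) 1))"

lemma park_pairs_finite: "finite (park_pairs R f g)"
proof -
  let ?N = "length f + length g"
  have "park_pairs R f g \<subseteq> (\<lambda>w. (take (length f) w, drop (length f) w)) ` {w. set w \<subseteq> {..?N} \<and> length w = ?N}"
  proof
    fix p assume "p \<in> park_pairs R f g"
    then obtain h k where p: "p = (h, k)" "is_pf (h @ k)" "park h = f" "park k = g"
      unfolding park_pairs_def by auto
    have lh: "length h = length f" "length k = length g"
      using arg_cong[OF p(3), of length] arg_cong[OF p(4), of length] by simp_all
    have "set (h @ k) \<subseteq> {..?N}" using p(2) pf_count_le_length lh unfolding is_pf_iff_pf_count by fastforce
    then show "p \<in> (\<lambda>w. (take (length f) w, drop (length f) w)) ` {w. set w \<subseteq> {..?N} \<and> length w = ?N}"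
      using p lh by (intro image_eqI[of _ _ "h @ k"]) auto
  qed
  moreover have "finite {w. set w \<subseteq> {..?N} \<and> length w = ?N}"
    by (rule finite_lists_length_eq) simp
  then have "finite ((\<lambda>w. (take (length f) w, drop (length f) w)) ` {w. set w \<subseteq> {..?N} \<and> length w = ?N})"
    by (rule finite_imageI)
  ultimately show ?thesis by (rule finite_subset)
qed

text \<open>Such a sum contains each word w at most once, namely for the split of w after |f|.\<close>
lemma lookup_park_sum: "Poly_Mapping.lookup (park_sum R E f g) w =
   (if park (take (length f) w) = f \<and> park (drop (length f) w) = g \<and> is_pf w \<and>
       R (Max (set (take (length f) w))) (Max (set (drop (length f) w)))
    then E (take (length f) w) (drop (length f) w) else 0)"
proof -
  let ?t = "(take (length f) w, drop (length f) w)"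
  have "Poly_Mapping.lookup (park_sum R E f g) w =
        (\<Sum>p\<in>park_pairs R f g. E (fst p) (snd p) * (if p = ?t then 1 else 0))"
    unfolding park_sum_def lookup_sum
  proof (rule sum.cong[OF refl])
    fix p assume "p \<in> park_pairs R f g"
    then obtain h k where p: "p = (h, k)" "park h = f" unfolding park_pairs_def by auto
    have "length h = length f" using arg_cong[OF p(2), of length] by simp
    then have "(h @ k = w) = (p = ?t)" using p by (auto simp: append_eq_conv_conj)
    then show "Poly_Mapping.lookup (case p of (h, k) \<Rightarrow> smult_pm (E h k) (Poly_Mapping.single (h @ k) 1)) w
       = E (fst p) (snd p) * (if p = ?t then 1 else 0)"
      using p by (auto simp: lookup_single when_def)
  qed
  also have "\<dots> = (if ?t \<in> park_pairs R f g then E (fst ?t) (snd ?t) else 0)"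
    by (simp add: park_pairs_finite sum.delta' if_distrib[where f="\<lambda>x. _ * x"] cong: if_cong)
  finally show ?thesis unfolding park_pairs_def by simp
qed

definition cut_expansion :: "(nat list \<Rightarrow>\<^sub>0 'a::comm_ring_1) \<Rightarrow> (nat list \<Rightarrow>\<^sub>0 'a) \<Rightarrow> (nat list \<Rightarrow>\<^sub>0 'a)
    \<Rightarrow> (nat list \<Rightarrow> nat \<Rightarrow> 'a) \<Rightarrow> bool" where
  "cut_expansion Y x y C \<longleftrightarrow> (\<forall>v. Poly_Mapping.lookup Y v =
      (\<Sum>k\<le>length v. Poly_Mapping.lookup x (park (take k v)) * Poly_Mapping.lookup y (park (drop k v)) * C v k))"

lemma sum_keys_delta:
  "(\<Sum>g\<in>Poly_Mapping.keys y. if g = a then Poly_Mapping.lookup y g * c else 0) =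
   Poly_Mapping.lookup y a * (c::'a::semiring_0)"
  by (simp add: sum.delta' in_keys_iff)

lemma if_prefix_eq_sum_cuts:
  "(if park (take (length f) w) = f then c (length f) else 0) =
   (\<Sum>n\<le>length w. if f = park (take n w) then c n else (0::'a::comm_monoid_add))"
proof (cases "length f \<le> length w")
  case True
  have "(\<Sum>n\<le>length w. if f = park (take n w) then c n else 0) =
        (\<Sum>n\<le>length w. if n = length f then (if f = park (take n w) then c n else 0) else 0)"
    by (rule sum.cong) (auto simp: min_def)
  also have "\<dots> = (if park (take (length f) w) = f then c (length f) else 0)"
    using True by (simp add: sum.delta' eq_commute)
  finally show ?thesis by simp
next
  case False
  then have "\<And>n. n \<le> length w \<Longrightarrow> f \<noteq> park (take n w)" "park (take (length f) w) \<noteq> f"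
    by (auto dest!: arg_cong[where f=length])
  then show ?thesis by simp
qed

lemma cut_expansion_bilin:
  assumes B: "\<And>f g w. Poly_Mapping.lookup (B f g) w =
     (if park (take (length f) w) = f \<and> park (drop (length f) w) = g then C w (length f) else 0)"
  shows "cut_expansion (bilin B x y) x y C"
  unfolding cut_expansion_def
proof
  fix w :: "nat list"
  let ?lx = "Poly_Mapping.lookup x" and ?ly = "Poly_Mapping.lookup y"
  have "Poly_Mapping.lookup (bilin B x y) w =
     (\<Sum>f\<in>Poly_Mapping.keys x. \<Sum>g\<in>Poly_Mapping.keys y. if g = park (drop (length f) w) then
        ?ly g * (if park (take (length f) w) = f then ?lx f * C w (length f) else 0) else 0)"
    unfolding lookup_bilin B by (intro sum.cong refl) (auto simp: mult_ac)
  also have "\<dots> = (\<Sum>f\<in>Poly_Mapping.keys x. if park (take (length f) w) = f then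
        ?lx f * ?ly (park (drop (length f) w)) * C w (length f) else 0)"
    unfolding sum_keys_delta by (intro sum.cong refl) (simp add: mult_ac)
  also have "\<dots> = (\<Sum>f\<in>Poly_Mapping.keys x. \<Sum>n\<le>length w.
        if f = park (take n w) then ?lx f * ?ly (park (drop n w)) * C w n else 0)"
    by (intro sum.cong refl if_prefix_eq_sum_cuts)
  also have "\<dots> = (\<Sum>n\<le>length w. \<Sum>f\<in>Poly_Mapping.keys x.
        if f = park (take n w) then ?lx f * ?ly (park (drop n w)) * C w n else 0)"
    by (rule sum.swap)
  also have "\<dots> = (\<Sum>n\<le>length w. ?lx (park (take n w)) * ?ly (park (drop n w)) * C w n)"
    by (intro sum.cong refl) (auto simp: sum.delta' in_keys_iff mult_ac)
  finally show "Poly_Mapping.lookup (bilin B x y) w =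
      (\<Sum>n\<le>length w. ?lx (park (take n w)) * ?ly (park (drop n w)) * C w n)" .
qed

definition wprec :: "'a::comm_ring_1 \<Rightarrow> nat list \<Rightarrow> nat list \<Rightarrow> 'a" where
  "wprec q x y = (if Max (set y) < Max (set x) then q ^ cap x y else 0)"
definition wsucc :: "'a::comm_ring_1 \<Rightarrow> nat list \<Rightarrow> nat list \<Rightarrow> 'a" where
  "wsucc q x y = (if Max (set x) < Max (set y) then q ^ cap x y else 0)"
definition wdot :: "'a::comm_ring_1 \<Rightarrow> nat list \<Rightarrow> nat list \<Rightarrow> 'a" where
  "wdot q x y = (if Max (set x) = Max (set y) then q ^ (cap x y - 1) else 0)"

definition cut_wt :: "(nat list \<Rightarrow> nat list \<Rightarrow> 'a::comm_ring_1) \<Rightarrow> nat list \<Rightarrow> nat \<Rightarrow> 'a" where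
  "cut_wt K w n = (if is_pf w then K (take n w) (drop n w) else 0)"

lemma cut_expansion_Prec: "cut_expansion (Prec q x y) x y (cut_wt (wprec q))"
proof -
  have "prec_b q = park_sum (\<lambda>a b. a > b) (\<lambda>h k. q ^ cap h k)"
    unfolding prec_b_def park_sum_def by (intro ext) simp
  then show ?thesis unfolding Prec_def
    by (intro cut_expansion_bilin) (simp add: lookup_park_sum cut_wt_def wprec_def)
qed

lemma cut_expansion_Succ: "cut_expansion (Succ q x y) x y (cut_wt (wsucc q))"
proof -
  have "succ_b q = park_sum (\<lambda>a b. a < b) (\<lambda>h k. q ^ cap h k)"
    unfolding succ_b_def park_sum_def by (intro ext) simp
  then show ?thesis unfolding Succ_def
    by (intro cut_expansion_bilin) (simp add: lookup_park_sum cut_wt_def wsucc_def)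
qed

lemma cut_expansion_Dot: "cut_expansion (Dot q x y) x y (cut_wt (wdot q))"
proof -
  have "dot_b q = park_sum (\<lambda>a b. a = b) (\<lambda>h k. q ^ (cap h k - 1))"
    unfolding dot_b_def park_sum_def by (intro ext) simp
  then show ?thesis unfolding Dot_def
    by (intro cut_expansion_bilin) (simp add: lookup_park_sum cut_wt_def wdot_def)
qed

lemma cut_expansion_add: "cut_expansion Y1 x y C1 \<Longrightarrow> cut_expansion Y2 x y C2 \<Longrightarrow> cut_expansion (Y1 + Y2) x y (\<lambda>v k. C1 v k + C2 v k)"
  unfolding cut_expansion_def by (simp add: lookup_add sum.distrib distrib_left)

lemma cut_expansion_smult: "cut_expansion Y x y C \<Longrightarrow> cut_expansion (smult_pm c Y) x y (\<lambda>v k. c * C v k)"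
  unfolding cut_expansion_def by (simp add: sum_distrib_left mult_ac)

section \<open>The weight identities behind the seven axioms\<close>

lemma q_times_power_pred: "Suc 0 \<le> X \<Longrightarrow> (q::'a::comm_ring_1) * q ^ (X - Suc 0) = q ^ X"
  by (cases X) simp_all

text \<open>Abstract data of three nonempty words x, y, z: a, b, c are their maxima, A = cap x y,
  B = cap (xy) z, C = cap x (yz), D = cap y z.\<close>
locale weight_data =
  fixes a b c A B C D :: nat
  assumes cap_balance: "A + B = C + D"
    and cap_A_pos: "a = b \<Longrightarrow> 1 \<le> A"
    and cap_B_pos: "max a b = c \<Longrightarrow> 1 \<le> B"
    and cap_C_pos: "a = max b c \<Longrightarrow> 1 \<le> C"
    and cap_D_pos: "b = c \<Longrightarrow> 1 \<le> D"
begin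

lemma weights_axiom1: "(if b < a then (q::'a::comm_ring_1) ^ A else 0) * (if c < max a b then q ^ B else 0) =
   (if max b c < a then q ^ C else 0) * ((if c < b then q ^ D else 0) + (if b < c then q ^ D else 0) + q * (if b = c then q ^ (D - 1) else 0))"
proof -
  have "q ^ A * q ^ B = q ^ C * q ^ D" using cap_balance by (simp add: power_add[symmetric])
  then show ?thesis using cap_D_pos
    by (cases b c rule: linorder_cases) (auto simp: q_times_power_pred)
qed

lemma weights_axiom2: "(if a < b then (q::'a::comm_ring_1) ^ A else 0) * (if c < max a b then q ^ B else 0) =
   (if a < max b c then q ^ C else 0) * (if c < b then q ^ D else 0)"
proof -
  have "q ^ A * q ^ B = q ^ C * q ^ D" using cap_balance by (simp add: power_add[symmetric])
  then show ?thesis by (cases b c rule: linorder_cases) auto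
qed

lemma weights_axiom3: "((if b < a then (q::'a::comm_ring_1) ^ A else 0) + (if a < b then q ^ A else 0) + q * (if a = b then q ^ (A - 1) else 0)) * (if max a b < c then q ^ B else 0) =
   (if a < max b c then q ^ C else 0) * (if b < c then q ^ D else 0)"
proof -
  have "q ^ A * q ^ B = q ^ C * q ^ D" using cap_balance by (simp add: power_add[symmetric])
  then show ?thesis using cap_A_pos
    by (cases a b rule: linorder_cases) (auto simp: q_times_power_pred)
qed

lemma weights_axiom4: "(if a = b then (q::'a::comm_ring_1) ^ (A - 1) else 0) * (if max a b = c then q ^ (B - 1) else 0) =
   (if a = max b c then q ^ (C - 1) else 0) * (if b = c then q ^ (D - 1) else 0)"
proof (cases "a = b \<and> b = c")
  case True
  then have "A - 1 + (B - 1) = C - 1 + (D - 1)" using cap_balance cap_A_pos cap_B_pos cap_C_pos cap_D_pos by auto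
  then have "q ^ (A - 1) * q ^ (B - 1) = q ^ (C - 1) * q ^ (D - 1)" by (simp add: power_add[symmetric])
  then show ?thesis using True by simp
qed auto

lemma weights_axiom5: "(if a < b then (q::'a::comm_ring_1) ^ A else 0) * (if max a b = c then q ^ (B - 1) else 0) =
   (if a < max b c then q ^ C else 0) * (if b = c then q ^ (D - 1) else 0)"
proof (cases "a < b \<and> b = c")
  case True
  then have "A + (B - 1) = C + (D - 1)" using cap_balance cap_B_pos cap_D_pos by auto
  then have "q ^ A * q ^ (B - 1) = q ^ C * q ^ (D - 1)" by (simp add: power_add[symmetric])
  then show ?thesis using True by simp
qed auto

lemma weights_axiom6: "(if b < a then (q::'a::comm_ring_1) ^ A else 0) * (if max a b = c then q ^ (B - 1) else 0) =
   (if a = max b c then q ^ (C - 1) else 0) * (if b < c then q ^ D else 0)"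
proof (cases "b < a \<and> a = c")
  case True
  then have "A + (B - 1) = (C - 1) + D" using cap_balance cap_B_pos cap_C_pos by auto
  then have "q ^ A * q ^ (B - 1) = q ^ (C - 1) * q ^ D" by (simp add: power_add[symmetric])
  then show ?thesis using True by simp
qed auto

lemma weights_axiom7: "(if a = b then (q::'a::comm_ring_1) ^ (A - 1) else 0) * (if c < max a b then q ^ B else 0) =
   (if a = max b c then q ^ (C - 1) else 0) * (if c < b then q ^ D else 0)"
proof (cases "a = b \<and> c < b")
  case True
  then have "(A - 1) + B = (C - 1) + D" using cap_balance cap_A_pos cap_C_pos by auto
  then have "q ^ (A - 1) * q ^ B = q ^ (C - 1) * q ^ D" by (simp add: power_add[symmetric])
  then show ?thesis using True by simp
qed auto

end

lemma sum_triangle_reindex: "(\<Sum>n\<le>(L::nat). \<Sum>m\<le>n. G m n) = (\<Sum>m\<le>L. \<Sum>k\<le>L - m. (G m (m + k) :: 'a::comm_monoid_add))"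
proof (induction L)
  case 0 then show ?case by simp
next
  case (Suc L)
  have "(\<Sum>m\<le>Suc L. \<Sum>k\<le>Suc L - m. G m (m + k)) =
        (\<Sum>m\<le>L. \<Sum>k\<le>Suc L - m. G m (m + k)) + G (Suc L) (Suc L)" by simp
  also have "(\<Sum>m\<le>L. \<Sum>k\<le>Suc L - m. G m (m + k)) = (\<Sum>m\<le>L. (\<Sum>k\<le>L - m. G m (m + k)) + G m (Suc L))"
  proof (rule sum.cong[OF refl])
    fix m assume "m \<in> {..L}"
    then have "Suc L - m = Suc (L - m)" by auto
    then show "(\<Sum>k\<le>Suc L - m. G m (m + k)) = (\<Sum>k\<le>L - m. G m (m + k)) + G m (Suc L)"
      using \<open>m \<in> {..L}\<close> by simp
  qed
  finally show ?case using Suc by (simp add: sum.distrib add.assoc)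
qed

lemma lookup_left_nested:
  assumes r1: "cut_expansion Y a b C1" and r2: "cut_expansion Z Y c C2"
  shows "Poly_Mapping.lookup Z w = (\<Sum>n\<le>length w. \<Sum>m\<le>n.
      Poly_Mapping.lookup a (park (take m w)) * Poly_Mapping.lookup b (park (drop m (take n w))) *
      Poly_Mapping.lookup c (park (drop n w)) * (C1 (park (take n w)) m * C2 w n))"
proof -
  have "Poly_Mapping.lookup Z w = (\<Sum>n\<le>length w. Poly_Mapping.lookup Y (park (take n w)) *
      Poly_Mapping.lookup c (park (drop n w)) * C2 w n)"
    using r2 unfolding cut_expansion_def by simp
  also have "\<dots> = (\<Sum>n\<le>length w. \<Sum>m\<le>n.
      Poly_Mapping.lookup a (park (take m w)) * Poly_Mapping.lookup b (park (drop m (take n w))) *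
      Poly_Mapping.lookup c (park (drop n w)) * (C1 (park (take n w)) m * C2 w n))"
  proof (rule sum.cong[OF refl])
    fix n assume n: "n \<in> {..length w}"
    have "Poly_Mapping.lookup Y (park (take n w)) = (\<Sum>m\<le>n.
      Poly_Mapping.lookup a (park (take m w)) * Poly_Mapping.lookup b (park (drop m (take n w))) * C1 (park (take n w)) m)"
      using r1 n unfolding cut_expansion_def by (auto simp: park_take park_drop min_def intro!: sum.cong)
    then show "Poly_Mapping.lookup Y (park (take n w)) * Poly_Mapping.lookup c (park (drop n w)) * C2 w n =
      (\<Sum>m\<le>n. Poly_Mapping.lookup a (park (take m w)) * Poly_Mapping.lookup b (park (drop m (take n w))) *
      Poly_Mapping.lookup c (park (drop n w)) * (C1 (park (take n w)) m * C2 w n))"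
      by (simp only: sum_distrib_right) (intro sum.cong refl, simp add: mult_ac)
  qed
  finally show ?thesis .
qed

lemma lookup_right_nested:
  assumes r1: "cut_expansion Y b c C1" and r2: "cut_expansion Z a Y C2"
  shows "Poly_Mapping.lookup Z w = (\<Sum>m\<le>length w. \<Sum>k\<le>length w - m.
      Poly_Mapping.lookup a (park (take m w)) * Poly_Mapping.lookup b (park (take k (drop m w))) *
      Poly_Mapping.lookup c (park (drop k (drop m w))) * (C1 (park (drop m w)) k * C2 w m))"
proof -
  have "Poly_Mapping.lookup Z w = (\<Sum>m\<le>length w. Poly_Mapping.lookup a (park (take m w)) *
      Poly_Mapping.lookup Y (park (drop m w)) * C2 w m)"
    using r2 unfolding cut_expansion_def by simp
  also have "\<dots> = (\<Sum>m\<le>length w. \<Sum>k\<le>length w - m.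
      Poly_Mapping.lookup a (park (take m w)) * Poly_Mapping.lookup b (park (take k (drop m w))) *
      Poly_Mapping.lookup c (park (drop k (drop m w))) * (C1 (park (drop m w)) k * C2 w m))"
  proof (rule sum.cong[OF refl])
    fix m assume m: "m \<in> {..length w}"
    have "Poly_Mapping.lookup Y (park (drop m w)) = (\<Sum>k\<le>length w - m.
      Poly_Mapping.lookup b (park (take k (drop m w))) * Poly_Mapping.lookup c (park (drop k (drop m w))) * C1 (park (drop m w)) k)"
      using r1 unfolding cut_expansion_def by (simp add: park_take park_drop)
    then show "Poly_Mapping.lookup a (park (take m w)) * Poly_Mapping.lookup Y (park (drop m w)) * C2 w m =
      (\<Sum>k\<le>length w - m. Poly_Mapping.lookup a (park (take m w)) * Poly_Mapping.lookup b (park (take k (drop m w))) *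
      Poly_Mapping.lookup c (park (drop k (drop m w))) * (C1 (park (drop m w)) k * C2 w m))"
      by (simp only: sum_distrib_right sum_distrib_left) (intro sum.cong refl, simp add: mult_ac)
  qed
  finally show ?thesis .
qed

text \<open>If the weights of the two nested products agree on all pairs of proper cuts, the two
  products have the same coefficients (cuts at the ends vanish since a, b, c have no
  constant term).\<close>
lemma lookup_nested_eq:
  assumes a0: "Poly_Mapping.lookup a [] = 0" and b0: "Poly_Mapping.lookup b [] = 0"
    and c0: "Poly_Mapping.lookup c [] = 0"
    and r1: "cut_expansion Y a b C1" and r2: "cut_expansion Z Y c C2" and r3: "cut_expansion Y' b c C1'" and r4: "cut_expansion Z' a Y' C2'"
    and W: "\<And>m n. 0 < m \<Longrightarrow> m < n \<Longrightarrow> n < length w \<Longrightarrow>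
       C1 (park (take n w)) m * C2 w n = C1' (park (drop m w)) (n - m) * C2' w m"
  shows "Poly_Mapping.lookup Z w = Poly_Mapping.lookup Z' w"
proof -
  let ?a = "Poly_Mapping.lookup a" and ?b = "Poly_Mapping.lookup b" and ?c = "Poly_Mapping.lookup c"
  have "Poly_Mapping.lookup Z w = (\<Sum>m\<le>length w. \<Sum>k\<le>length w - m.
      ?a (park (take m w)) * ?b (park (drop m (take (m + k) w))) *
      ?c (park (drop (m + k) w)) * (C1 (park (take (m + k) w)) m * C2 w (m + k)))"
    unfolding lookup_left_nested[OF r1 r2] by (rule sum_triangle_reindex)
  also have "\<dots> = (\<Sum>m\<le>length w. \<Sum>k\<le>length w - m.
      ?a (park (take m w)) * ?b (park (take k (drop m w))) *
      ?c (park (drop k (drop m w))) * (C1' (park (drop m w)) k * C2' w m))"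
  proof (intro sum.cong[OF refl])
    fix m k assume m: "m \<in> {..length w}" and k: "k \<in> {..length w - m}"
    have e1: "drop m (take (m + k) w) = take k (drop m w)" by (simp add: drop_take)
    have e2: "drop k (drop m w) = drop (m + k) w" by (simp add: add.commute)
    show "?a (park (take m w)) * ?b (park (drop m (take (m + k) w))) *
      ?c (park (drop (m + k) w)) * (C1 (park (take (m + k) w)) m * C2 w (m + k)) =
      ?a (park (take m w)) * ?b (park (take k (drop m w))) *
      ?c (park (drop k (drop m w))) * (C1' (park (drop m w)) k * C2' w m)"
    proof (cases "m = 0 \<or> k = 0 \<or> m + k = length w")
      case True
      then show ?thesis using a0 b0 c0 m k unfolding e1 e2 by auto
    next
      case False
      then have "0 < m" "m < m + k" "m + k < length w" using m k by auto
      from W[OF this] show ?thesis unfolding e1 e2 by simp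
    qed
  qed
  also have "\<dots> = Poly_Mapping.lookup Z' w" unfolding lookup_right_nested[OF r3 r4] ..
  finally show ?thesis .
qed

text \<open>Maxima and common values are preserved by parkval, which is strictly monotone.\<close>
lemma Max_map_parkval:
  assumes "x \<noteq> []" "set x \<subseteq> set u"
  shows "Max (set (map (parkval u) x)) = parkval u (Max (set x))"
proof (rule Max_eqI)
  have mx: "Max (set x) \<in> set x" using assms by simp
  show "parkval u (Max (set x)) \<in> set (map (parkval u) x)" using mx by simp
  fix y assume "y \<in> set (map (parkval u) x)"
  then obtain z where z: "z \<in> set x" "y = parkval u z" by auto
  have "z \<le> Max (set x)" using z by simp
  moreover have "z \<in> set u" "Max (set x) \<in> set u" using z mx assms by auto
  ultimately show "y \<le> parkval u (Max (set x))" using z parkval_le_iff[of z u "Max (set x)"] by simp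
qed simp

lemma cap_map_parkval:
  assumes "set x \<subseteq> set u" "set y \<subseteq> set u"
  shows "cap (map (parkval u) x) (map (parkval u) y) = cap x y"
proof -
  have inj: "inj_on (parkval u) (set x \<union> set y)" using parkval_inj assms by (metis inj_on_subset le_sup_iff)
  have "set (map (parkval u) x) \<inter> set (map (parkval u) y) = parkval u ` (set x \<inter> set y)"
    using inj by (auto simp: inj_on_def)
  moreover have "inj_on (parkval u) (set x \<inter> set y)" using inj by (rule inj_on_subset) auto
  ultimately show ?thesis unfolding cap_def by (simp add: card_image)
qed

definition park_invariant :: "(nat list \<Rightarrow> nat list \<Rightarrow> 'a) \<Rightarrow> bool" where
  "park_invariant K \<longleftrightarrow> (\<forall>u x y. x \<noteq> [] \<longrightarrow> y \<noteq> [] \<longrightarrow> set x \<subseteq> set u \<longrightarrow> set y \<subseteq> set u \<longrightarrow>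
      K (map (parkval u) x) (map (parkval u) y) = K x y)"

lemma park_invariant_wprec: "park_invariant (wprec q)"
  unfolding park_invariant_def wprec_def
proof (intro allI impI)
  fix u x y :: "nat list"
  assume a: "x \<noteq> []" "y \<noteq> []" "set x \<subseteq> set u" "set y \<subseteq> set u"
  have m: "Max (set x) \<in> set u" "Max (set y) \<in> set u" using a by auto
  show "(if Max (set (map (parkval u) y)) < Max (set (map (parkval u) x)) then q ^ cap (map (parkval u) x) (map (parkval u) y) else 0) =
        (if Max (set y) < Max (set x) then q ^ cap x y else 0)"
    unfolding Max_map_parkval[OF a(1) a(3)] Max_map_parkval[OF a(2) a(4)] cap_map_parkval[OF a(3) a(4)]
    using m by (simp add: parkval_less_iff)
qed

lemma park_invariant_wsucc: "park_invariant (wsucc q)"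
  unfolding park_invariant_def wsucc_def
proof (intro allI impI)
  fix u x y :: "nat list"
  assume a: "x \<noteq> []" "y \<noteq> []" "set x \<subseteq> set u" "set y \<subseteq> set u"
  have m: "Max (set x) \<in> set u" "Max (set y) \<in> set u" using a by auto
  show "(if Max (set (map (parkval u) x)) < Max (set (map (parkval u) y)) then q ^ cap (map (parkval u) x) (map (parkval u) y) else 0) =
        (if Max (set x) < Max (set y) then q ^ cap x y else 0)"
    unfolding Max_map_parkval[OF a(1) a(3)] Max_map_parkval[OF a(2) a(4)] cap_map_parkval[OF a(3) a(4)]
    using m by (simp add: parkval_less_iff)
qed

lemma park_invariant_wdot: "park_invariant (wdot q)"
  unfolding park_invariant_def wdot_def
proof (intro allI impI)
  fix u x y :: "nat list"
  assume a: "x \<noteq> []" "y \<noteq> []" "set x \<subseteq> set u" "set y \<subseteq> set u"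
  have m: "Max (set x) \<in> set u" "Max (set y) \<in> set u" using a by auto
  have e: "parkval u (Max (set x)) = parkval u (Max (set y)) \<longleftrightarrow> Max (set x) = Max (set y)"
    using parkval_inj[of u] m by (auto simp: inj_on_def)
  show "(if Max (set (map (parkval u) x)) = Max (set (map (parkval u) y)) then q ^ (cap (map (parkval u) x) (map (parkval u) y) - 1) else 0) =
        (if Max (set x) = Max (set y) then q ^ (cap x y - 1) else 0)"
    unfolding Max_map_parkval[OF a(1) a(3)] Max_map_parkval[OF a(2) a(4)] cap_map_parkval[OF a(3) a(4)]
    using e by simp
qed

lemma park_invariant_comb: "park_invariant K1 \<Longrightarrow> park_invariant K2 \<Longrightarrow> park_invariant K3 \<Longrightarrow> park_invariant (\<lambda>x y. K1 x y + K2 x y + c * K3 x y)"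
  unfolding park_invariant_def by simp

lemma cut_wt_park:
  assumes "park_invariant K" "0 < m" "m < length u"
  shows "cut_wt K (park u) m = K (take m u) (drop m u)"
proof -
  have "take m (park u) = map (parkval u) (take m u)" "drop m (park u) = map (parkval u) (drop m u)"
    by (simp_all add: park_eq_map_parkval take_map drop_map)
  moreover have "take m u \<noteq> []" "drop m u \<noteq> []" using assms by auto
  moreover have "set (take m u) \<subseteq> set u" "set (drop m u) \<subseteq> set u"
    by (simp_all add: set_take_subset set_drop_subset)
  ultimately show ?thesis using assms(1) is_pf_park unfolding cut_wt_def park_invariant_def by simp
qed

text \<open>Three nonempty words provide weight data (inclusion-exclusion for the common values).\<close>
lemma weight_data_lists:
  assumes "x \<noteq> []" "y \<noteq> []" "z \<noteq> []"
  shows "weight_data (Max (set x)) (Max (set y)) (Max (set z)) (cap x y) (cap (x @ y) z) (cap x (y @ z)) (cap y z)"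
proof -
  let ?X = "set x" and ?Y = "set y" and ?Z = "set z"
  have f: "finite ?X" "finite ?Y" "finite ?Z" by auto
  have mx: "Max ?X \<in> ?X" "Max ?Y \<in> ?Y" "Max ?Z \<in> ?Z" using assms by auto
  have c1: "cap (x @ y) z = card ((?X \<inter> ?Z) \<union> (?Y \<inter> ?Z))" unfolding cap_def by (simp add: Int_Un_distrib2)
  have c2: "cap x (y @ z) = card ((?X \<inter> ?Y) \<union> (?X \<inter> ?Z))" unfolding cap_def by (simp add: Int_Un_distrib)
  have u1: "card (?X \<inter> ?Z) + card (?Y \<inter> ?Z) = card ((?X \<inter> ?Z) \<union> (?Y \<inter> ?Z)) + card (?X \<inter> ?Y \<inter> ?Z)"
    using card_Un_Int[of "?X \<inter> ?Z" "?Y \<inter> ?Z"] by (simp add: Int_ac)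
  have u2: "card (?X \<inter> ?Y) + card (?X \<inter> ?Z) = card ((?X \<inter> ?Y) \<union> (?X \<inter> ?Z)) + card (?X \<inter> ?Y \<inter> ?Z)"
    using card_Un_Int[of "?X \<inter> ?Y" "?X \<inter> ?Z"] by (simp add: Int_ac)
  have pos: "\<And>v A B. v \<in> A \<Longrightarrow> v \<in> B \<Longrightarrow> finite A \<Longrightarrow> 1 \<le> card (A \<inter> B)"
    by (metis One_nat_def Suc_leI card_gt_0_iff disjoint_iff finite_Int)
  show ?thesis
  proof
    show "cap x y + cap (x @ y) z = cap x (y @ z) + cap y z"
      unfolding c1 c2 using u1 u2 unfolding cap_def by linarith
    show "1 \<le> cap x y" if "Max ?X = Max ?Y" unfolding cap_def using pos[of "Max ?X" ?X ?Y] that mx by simp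
    show "1 \<le> cap (x @ y) z" if "max (Max ?X) (Max ?Y) = Max ?Z"
      unfolding cap_def using pos[of "Max ?Z" "?X \<union> ?Y" ?Z] that mx by (simp add: max_def split: if_splits)
    show "1 \<le> cap x (y @ z)" if "Max ?X = max (Max ?Y) (Max ?Z)"
      unfolding cap_def using pos[of "Max ?X" ?X "?Y \<union> ?Z"] that mx by (simp add: max_def split: if_splits)
    show "1 \<le> cap y z" if "Max ?Y = Max ?Z" unfolding cap_def using pos[of "Max ?Y" ?Y ?Z] that mx by simp
  qed
qed

lemma Max_append: "x \<noteq> [] \<Longrightarrow> y \<noteq> [] \<Longrightarrow> Max (set (x @ y)) = max (Max (set x)) (Max (set y))"
  by (simp add: Max_Un)

lemma nested_products_eq:
  assumes a0: "Poly_Mapping.lookup a [] = 0" and b0: "Poly_Mapping.lookup b [] = 0"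
    and c0: "Poly_Mapping.lookup c [] = 0"
    and r1: "cut_expansion Y a b (cut_wt K1)" and r2: "cut_expansion Z Y c (cut_wt K2)" and r3: "cut_expansion Y' b c (cut_wt K3)" and r4: "cut_expansion Z' a Y' (cut_wt K4)"
    and k1: "park_invariant K1" and k3: "park_invariant K3"
    and id: "\<And>x y z. x \<noteq> [] \<Longrightarrow> y \<noteq> [] \<Longrightarrow> z \<noteq> [] \<Longrightarrow> K1 x y * K2 (x @ y) z = K3 y z * K4 x (y @ z)"
  shows "Z = Z'"
proof (rule poly_mapping_eqI)
  fix w
  show "Poly_Mapping.lookup Z w = Poly_Mapping.lookup Z' w"
  proof (rule lookup_nested_eq[OF a0 b0 c0 r1 r2 r3 r4])
    fix m n assume mn: "0 < m" "m < n" "n < length w"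
    show "cut_wt K1 (park (take n w)) m * cut_wt K2 w n = cut_wt K3 (park (drop m w)) (n - m) * cut_wt K4 w m"
    proof (cases "is_pf w")
      case False then show ?thesis by (simp add: cut_wt_def)
    next
      case True
      let ?x = "take m w" and ?y = "drop m (take n w)" and ?z = "drop n w"
      have ne: "?x \<noteq> []" "?y \<noteq> []" "?z \<noteq> []" using mn by auto
      have e1: "take m (take n w) = ?x" "take n w = ?x @ ?y" using mn
        by (simp_all add: min_def) (metis append_take_drop_id take_take min.absorb1 less_imp_le)
      have e2: "take (n - m) (drop m w) = ?y" "drop (n - m) (drop m w) = ?z" "drop m w = ?y @ ?z"
        using mn by (simp_all add: drop_take) (metis append_take_drop_id drop_drop drop_take le_add_diff_inverse2 less_imp_le)
      have "cut_wt K1 (park (take n w)) m = K1 ?x ?y"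
        using cut_wt_park[OF k1 mn(1), of "take n w"] mn e1 by simp
      moreover have "cut_wt K3 (park (drop m w)) (n - m) = K3 ?y ?z"
        using cut_wt_park[OF k3, of "n - m" "drop m w"] mn e2 by simp
      moreover have "cut_wt K2 w n = K2 (?x @ ?y) ?z" using True e1 by (simp add: cut_wt_def)
      moreover have "cut_wt K4 w m = K4 ?x (?y @ ?z)" using True e2 by (simp add: cut_wt_def)
      ultimately show ?thesis using id[OF ne] by simp
    qed
  qed
qed

section \<open>PQSym^* is a q-tridendriform algebra\<close>

lemma cut_wt_comb: "(\<lambda>v k. cut_wt K1 v k + cut_wt K2 v k + c * cut_wt K3 v k) = cut_wt (\<lambda>x y. K1 x y + K2 x y + c * K3 x y)"
  by (auto simp: cut_wt_def fun_eq_iff)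

lemma cut_expansion_comb: "cut_expansion Y1 b c (cut_wt K1) \<Longrightarrow> cut_expansion Y2 b c (cut_wt K2) \<Longrightarrow> cut_expansion Y3 b c (cut_wt K3) \<Longrightarrow>
    cut_expansion (Y1 + Y2 + smult_pm q Y3) b c (cut_wt (\<lambda>x y. K1 x y + K2 x y + q * K3 x y))"
proof -
  assume r: "cut_expansion Y1 b c (cut_wt K1)" "cut_expansion Y2 b c (cut_wt K2)" "cut_expansion Y3 b c (cut_wt K3)"
  have "cut_expansion (Y1 + Y2 + smult_pm q Y3) b c (\<lambda>v k. cut_wt K1 v k + cut_wt K2 v k + q * cut_wt K3 v k)"
    by (intro cut_expansion_add cut_expansion_smult r)
  then show ?thesis unfolding cut_wt_comb .
qed

abbreviation "wstar q \<equiv> (\<lambda>x y. wprec q x y + wsucc q x y + q * wdot q x y)"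

lemma cut_expansion_star: "cut_expansion (Prec q b c + Succ q b c + smult_pm q (Dot q b c)) b c (cut_wt (wstar q))"
  by (rule cut_expansion_comb[OF cut_expansion_Prec cut_expansion_Succ cut_expansion_Dot])

lemma park_invariant_wstar: "park_invariant (wstar q)"
  by (rule park_invariant_comb[OF park_invariant_wprec park_invariant_wsucc park_invariant_wdot])

lemma PQS_lookup_Nil: "a \<in> PQS \<Longrightarrow> Poly_Mapping.lookup a [] = 0"
  unfolding PQS_def by (auto simp: in_keys_iff)

lemma cut_expansion_PQS: assumes "cut_expansion Y a b (cut_wt K)" "a \<in> PQS" shows "Y \<in> PQS"
  unfolding PQS_def
proof (intro CollectI subsetI)
  fix w assume "w \<in> Poly_Mapping.keys Y"
  then have "(\<Sum>k\<le>length w. Poly_Mapping.lookup a (park (take k w)) * Poly_Mapping.lookup b (park (drop k w)) * cut_wt K w k) \<noteq> 0"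
    using assms(1) unfolding cut_expansion_def by (simp add: in_keys_iff)
  then obtain k where k: "Poly_Mapping.lookup a (park (take k w)) * Poly_Mapping.lookup b (park (drop k w)) * cut_wt K w k \<noteq> 0"
    by (meson sum.not_neutral_contains_not_neutral)
  then have "cut_wt K w k \<noteq> 0" "Poly_Mapping.lookup a (park (take k w)) \<noteq> 0" by auto
  then have "is_pf w" by (simp add: cut_wt_def split: if_splits)
  moreover have "w \<noteq> []"
  proof
    assume "w = []"
    then show False using \<open>Poly_Mapping.lookup a (park (take k w)) \<noteq> 0\<close> PQS_lookup_Nil[OF assms(2)] by simp
  qed
  ultimately show "is_pf w \<and> w \<noteq> []" by auto
qed

context fixes q :: "'a::comm_ring_1" and x y z :: "nat list"
  assumes ne: "x \<noteq> []" "y \<noteq> []" "z \<noteq> []"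
begin

interpretation WD: weight_data "Max (set x)" "Max (set y)" "Max (set z)" "cap x y" "cap (x @ y) z" "cap x (y @ z)" "cap y z"
  by (rule weight_data_lists[OF ne])

lemma weight_identity1: "wprec q x y * wprec q (x @ y) z = wstar q y z * wprec q x (y @ z)"
  using WD.weights_axiom1[of q] unfolding wprec_def wsucc_def wdot_def Max_append[OF ne(1,2)] Max_append[OF ne(2,3)] by (simp only: mult.commute)
lemma weight_identity2: "wsucc q x y * wprec q (x @ y) z = wprec q y z * wsucc q x (y @ z)"
  using WD.weights_axiom2[of q] unfolding wprec_def wsucc_def wdot_def Max_append[OF ne(1,2)] Max_append[OF ne(2,3)] by (simp only: mult.commute)
lemma weight_identity3: "wstar q x y * wsucc q (x @ y) z = wsucc q y z * wsucc q x (y @ z)"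
  using WD.weights_axiom3[of q] unfolding wprec_def wsucc_def wdot_def Max_append[OF ne(1,2)] Max_append[OF ne(2,3)] by (simp only: mult.commute)
lemma weight_identity4: "wdot q x y * wdot q (x @ y) z = wdot q y z * wdot q x (y @ z)"
  using WD.weights_axiom4[of q] unfolding wprec_def wsucc_def wdot_def Max_append[OF ne(1,2)] Max_append[OF ne(2,3)] by (simp only: mult.commute)
lemma weight_identity5: "wsucc q x y * wdot q (x @ y) z = wdot q y z * wsucc q x (y @ z)"
  using WD.weights_axiom5[of q] unfolding wprec_def wsucc_def wdot_def Max_append[OF ne(1,2)] Max_append[OF ne(2,3)] by (simp only: mult.commute)
lemma weight_identity6: "wprec q x y * wdot q (x @ y) z = wsucc q y z * wdot q x (y @ z)"
  using WD.weights_axiom6[of q] unfolding wprec_def wsucc_def wdot_def Max_append[OF ne(1,2)] Max_append[OF ne(2,3)] by (simp only: mult.commute)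
lemma weight_identity7: "wdot q x y * wprec q (x @ y) z = wprec q y z * wdot q x (y @ z)"
  using WD.weights_axiom7[of q] unfolding wprec_def wsucc_def wdot_def Max_append[OF ne(1,2)] Max_append[OF ne(2,3)] by (simp only: mult.commute)

end

theorem q_tridendriform_PQS: "q_tridendriform (q::'a::comm_ring_1) PQS (Prec q) (Dot q) (Succ q)"
  unfolding q_tridendriform_def
proof (intro conjI ballI)
  fix a b :: "nat list \<Rightarrow>\<^sub>0 'a" assume a: "a \<in> PQS" and b: "b \<in> PQS"
  show "Prec q a b \<in> PQS" by (rule cut_expansion_PQS[OF cut_expansion_Prec a])
  show "Dot q a b \<in> PQS" by (rule cut_expansion_PQS[OF cut_expansion_Dot a])
  show "Succ q a b \<in> PQS" by (rule cut_expansion_PQS[OF cut_expansion_Succ a])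
next
  fix a b c :: "nat list \<Rightarrow>\<^sub>0 'a" assume a: "a \<in> PQS" and b: "b \<in> PQS" and c: "c \<in> PQS"
  note z = PQS_lookup_Nil[OF a] PQS_lookup_Nil[OF b] PQS_lookup_Nil[OF c]
  show "Prec q (Prec q a b) c = Prec q a (Prec q b c + Succ q b c + smult_pm q (Dot q b c))"
    by (rule nested_products_eq[OF z cut_expansion_Prec cut_expansion_Prec cut_expansion_star cut_expansion_Prec
          park_invariant_wprec park_invariant_wstar weight_identity1])
  show "Prec q (Succ q a b) c = Succ q a (Prec q b c)"
    by (rule nested_products_eq[OF z cut_expansion_Succ cut_expansion_Prec cut_expansion_Prec cut_expansion_Succ
          park_invariant_wsucc park_invariant_wprec weight_identity2])
  show "Succ q (Prec q a b + Succ q a b + smult_pm q (Dot q a b)) c = Succ q a (Succ q b c)"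
    by (rule nested_products_eq[OF z cut_expansion_star cut_expansion_Succ cut_expansion_Succ cut_expansion_Succ
          park_invariant_wstar park_invariant_wsucc weight_identity3])
  show "Dot q (Dot q a b) c = Dot q a (Dot q b c)"
    by (rule nested_products_eq[OF z cut_expansion_Dot cut_expansion_Dot cut_expansion_Dot cut_expansion_Dot
          park_invariant_wdot park_invariant_wdot weight_identity4])
  show "Dot q (Succ q a b) c = Succ q a (Dot q b c)"
    by (rule nested_products_eq[OF z cut_expansion_Succ cut_expansion_Dot cut_expansion_Dot cut_expansion_Succ
          park_invariant_wsucc park_invariant_wdot weight_identity5])
  show "Dot q (Prec q a b) c = Dot q a (Succ q b c)"
    by (rule nested_products_eq[OF z cut_expansion_Prec cut_expansion_Dot cut_expansion_Succ cut_expansion_Dot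
          park_invariant_wprec park_invariant_wsucc weight_identity6])
  show "Prec q (Dot q a b) c = Dot q a (Prec q b c)"
    by (rule nested_products_eq[OF z cut_expansion_Dot cut_expansion_Prec cut_expansion_Prec cut_expansion_Dot
          park_invariant_wdot park_invariant_wprec weight_identity7])
qed

section \<open>The terms of the coproduct: cut points\<close>

definition lowpart :: "nat \<Rightarrow> nat list \<Rightarrow> nat list" where
  "lowpart j f = filter (\<lambda>v. v \<le> j) f"
definition highpart :: "nat \<Rightarrow> nat list \<Rightarrow> nat list" where
  "highpart j f = map (\<lambda>v. v - j) (filter (\<lambda>v. j < v) f)"
definition cuts :: "nat list \<Rightarrow> nat set" where
  "cuts f = {j. j \<le> length f \<and> length (lowpart j f) = j \<and> is_pf (lowpart j f) \<and> is_pf (highpart j f)}"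

lemma finite_cuts: "finite (cuts f)"
  unfolding cuts_def by (rule finite_subset[of _ "{..length f}"]) auto

lemma nth_filter_rank:
  assumes "i < length xs" "P (xs ! i)"
  shows "filter P xs ! length (filter P (take i xs)) = xs ! i"
proof -
  have "xs = take i xs @ xs ! i # drop (Suc i) xs" using assms(1) by (rule id_take_nth_drop)
  then have "filter P xs = filter P (take i xs) @ xs ! i # filter P (drop (Suc i) xs)"
    using assms(2) by (metis filter.simps(2) filter_append)
  then show ?thesis by (simp add: nth_append)
qed

lemma rank_lt:
  assumes "i < length xs" "P (xs ! i)"
  shows "length (filter P (take i xs)) < length (filter P xs)"
proof -
  have "xs = take i xs @ xs ! i # drop (Suc i) xs" using assms(1) by (rule id_take_nth_drop)
  then have "filter P xs = filter P (take i xs) @ xs ! i # filter P (drop (Suc i) xs)"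
    using assms(2) by (metis filter.simps(2) filter_append)
  then show ?thesis by simp
qed

lemma rank_mono_le: "a \<le> b \<Longrightarrow> length (filter P (take a xs)) \<le> length (filter P (take b xs))"
proof -
  assume "a \<le> b"
  then have "take b xs = take a xs @ drop a (take b xs)" by (metis append_take_drop_id min.absorb1 take_take)
  then show ?thesis by (metis filter_append le_add1 length_append)
qed

lemma rank_strict:
  assumes "i < i'" "i' \<le> length xs" "P (xs ! i)"
  shows "length (filter P (take i xs)) < length (filter P (take i' xs))"
proof -
  have "take (Suc i) xs = take i xs @ [xs ! i]" using assms by (simp add: take_Suc_conv_app_nth)
  then have "length (filter P (take (Suc i) xs)) = Suc (length (filter P (take i xs)))" using assms(3) by simp
  moreover have "length (filter P (take (Suc i) xs)) \<le> length (filter P (take i' xs))"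
    using assms by (intro rank_mono_le) simp
  ultimately show ?thesis by simp
qed

lemma len_filter_take_card: "i \<le> length xs \<Longrightarrow> length (filter P (take i xs)) = card {i'. i' < i \<and> P (xs ! i')}"
  unfolding length_filter_conv_card by (intro arg_cong[where f=card]) auto

lemma filter_le_gt_len: "length (filter (\<lambda>v. v \<le> (j::nat)) f) + length (filter (\<lambda>v. j < v) f) = length f"
  by (induction f) auto

lemma rank_card:
  assumes d: "\<delta> permutes {..<(n::nat)}" and S: "S \<subseteq> {..<n}" and sm: "strict_mono_on S (inv \<delta>)"
    and i: "i < n" "\<delta> i \<in> S"
  shows "card {i'. i' < i \<and> \<delta> i' \<in> S} = card {s \<in> S. s < \<delta> i}"
proof -
  have inj: "inj \<delta>" using permutes_inj[OF d] .
  have iv: "\<And>x. inv \<delta> (\<delta> x) = x" "\<And>x. \<delta> (inv \<delta> x) = x" using permutes_inverses[OF d] by auto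
  have key: "\<And>i'. \<delta> i' \<in> S \<Longrightarrow> i' < i \<longleftrightarrow> \<delta> i' < \<delta> i"
  proof -
    fix i' assume i': "\<delta> i' \<in> S"
    have dir: "\<And>a b. \<delta> a \<in> S \<Longrightarrow> \<delta> b \<in> S \<Longrightarrow> \<delta> a < \<delta> b \<Longrightarrow> a < b"
      using sm iv unfolding strict_mono_on_def by metis
    show "i' < i \<longleftrightarrow> \<delta> i' < \<delta> i"
    proof
      assume "i' < i"
      moreover have "\<delta> i' \<noteq> \<delta> i" using \<open>i' < i\<close> by (simp add: inj_eq[OF inj])
      ultimately show "\<delta> i' < \<delta> i" using dir[OF i(2) i'] by (metis linorder_neqE_nat not_less_iff_gr_or_eq)
    qed (rule dir[OF i' i(2)])
  qed
  have "\<delta> ` {i'. i' < i \<and> \<delta> i' \<in> S} = {s \<in> S. s < \<delta> i}"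
  proof (intro set_eqI iffI)
    fix s assume "s \<in> \<delta> ` {i'. i' < i \<and> \<delta> i' \<in> S}"
    then show "s \<in> {s \<in> S. s < \<delta> i}" using key by auto
  next
    fix s assume s: "s \<in> {s \<in> S. s < \<delta> i}"
    then have "\<delta> (inv \<delta> s) \<in> S" "\<delta> (inv \<delta> s) < \<delta> i" using iv by auto
    then have "inv \<delta> s < i" using key by blast
    then show "s \<in> \<delta> ` {i'. i' < i \<and> \<delta> i' \<in> S}" using s iv by (intro image_eqI[of _ _ "inv \<delta> s"]) auto
  qed
  moreover have "inj_on \<delta> {i'. i' < i \<and> \<delta> i' \<in> S}" using inj by (rule inj_on_subset) simp
  ultimately show ?thesis by (metis card_image)
qed

lemma card_preimage:
  assumes d: "\<delta> permutes {..<(n::nat)}"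
  shows "card {i. i < n \<and> P (\<delta> i)} = card {s. s < n \<and> P s}"
proof -
  have "\<delta> ` {i. i < n \<and> P (\<delta> i)} = {s. s < n \<and> P s}"
  proof (intro set_eqI iffI)
    fix s assume "s \<in> {s. s < n \<and> P s}"
    then show "s \<in> \<delta> ` {i. i < n \<and> P (\<delta> i)}"
      using permutes_inverses[OF d] permutes_in_image[OF permutes_inv[OF d]]
      by (intro image_eqI[of _ _ "inv \<delta> s"]) auto
  qed (use permutes_in_image[OF d] in auto)
  moreover have "inj_on \<delta> {i. i < n \<and> P (\<delta> i)}" using permutes_inj[OF d] by (rule inj_on_subset) simp
  ultimately show ?thesis by (metis card_image)
qed

lemma pf_vals: "is_pf f \<Longrightarrow> v \<in> set f \<Longrightarrow> 1 \<le> v \<and> v \<le> length f"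
  unfolding is_pf_iff_pf_count using pf_count_le_length by (auto simp: pf_count_def)

lemma strict_mono_on_inv_permutes:
  assumes d: "d permutes A"
    and mono: "\<And>x y. x \<in> I \<Longrightarrow> y \<in> I \<Longrightarrow> x < y \<Longrightarrow> d x < (d y :: nat)"
    and pre: "\<And>s. s \<in> S \<Longrightarrow> inv d s \<in> I"
  shows "strict_mono_on S (inv d)"
proof (rule strict_mono_onI)
  fix a b :: nat assume ab: "a \<in> S" "b \<in> S" "a < b"
  have iv: "d (inv d a) = a" "d (inv d b) = b" using permutes_inverses(1)[OF d] by auto
  show "inv d a < inv d b"
  proof (rule ccontr)
    assume "\<not> inv d a < inv d b"
    then have "inv d b < inv d a \<or> inv d b = inv d a" by linarith
    then have "b < a \<or> b = a" using mono[OF pre[OF ab(2)] pre[OF ab(1)]] iv by metis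
    then show False using ab(3) by linarith
  qed
qed

definition cut_perm :: "nat \<Rightarrow> nat list \<Rightarrow> nat \<Rightarrow> nat" where
  "cut_perm j f i = (if i < length f then (if f ! i \<le> j then length (filter (\<lambda>v. v \<le> j) (take i f))
     else j + length (filter (\<lambda>v. j < v) (take i f))) else i)"

context
  fixes j :: nat and f :: "nat list"
  assumes len_low: "length (lowpart j f) = j"
begin

lemma length_high: "length (filter (\<lambda>v. j < v) f) = length f - j"
  using filter_le_gt_len[of j f] len_low unfolding lowpart_def by simp

lemma cut_le_length: "j \<le> length f"
  using len_low length_filter_le[of _ f] unfolding lowpart_def by metis

lemma cut_perm_low: "i < length f \<Longrightarrow> f ! i \<le> j \<Longrightarrow> cut_perm j f i < j"
  unfolding cut_perm_def using rank_lt[of i f "\<lambda>v. v \<le> j"] len_low by (simp add: lowpart_def)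

lemma cut_perm_high: "i < length f \<Longrightarrow> \<not> f ! i \<le> j \<Longrightarrow> j \<le> cut_perm j f i \<and> cut_perm j f i < length f"
  unfolding cut_perm_def using rank_lt[of i f "\<lambda>v. j < v"] length_high cut_le_length by fastforce

lemma cut_perm_mono:
  assumes "x < y" "y < length f" "f ! x \<le> j \<longleftrightarrow> f ! y \<le> j"
  shows "cut_perm j f x < cut_perm j f y"
  using assms rank_strict[of x y f "\<lambda>v. v \<le> j"] rank_strict[of x y f "\<lambda>v. j < v"]
  unfolding cut_perm_def by (cases "f ! x \<le> j") auto

lemma cut_perm_inj: "inj_on (cut_perm j f) {..<length f}"
proof -
  have ne: "cut_perm j f x \<noteq> cut_perm j f y" if "x < y" "y < length f" for x y
  proof (cases "f ! x \<le> j \<longleftrightarrow> f ! y \<le> j")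
    case True then show ?thesis using cut_perm_mono[OF that True] by simp
  next
    case False then show ?thesis using that cut_perm_low cut_perm_high
      by (metis order.strict_trans leD)
  qed
  show ?thesis by (rule inj_onI) (metis lessThan_iff linorder_neqE_nat ne)
qed

lemma cut_perm_permutes: "cut_perm j f permutes {..<length f}"
proof (rule bij_imp_permutes)
  have "cut_perm j f ` {..<length f} \<subseteq> {..<length f}"
    using cut_perm_low cut_perm_high cut_le_length by (force simp: less_le_trans)
  then show "bij_betw (cut_perm j f) {..<length f} {..<length f}" unfolding bij_betw_def
    using cut_perm_inj endo_inj_surj[of "{..<length f}" "cut_perm j f"] by simp
  show "\<And>x. x \<notin> {..<length f} \<Longrightarrow> cut_perm j f x = x" unfolding cut_perm_def by simp
qed

lemma cut_perm_inv_mono: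
  shows "strict_mono_on {..<j} (inv (cut_perm j f))"
    and "strict_mono_on {j..<length f} (inv (cut_perm j f))"
proof -
  let ?d = "cut_perm j f"
  have iv: "?d (inv ?d s) = s" for s using permutes_inverses(1)[OF cut_perm_permutes] .
  have ivin: "inv ?d s < length f" if "s < length f" for s
    using permutes_in_image[OF permutes_inv[OF cut_perm_permutes]] that by simp
  show "strict_mono_on {..<j} (inv ?d)"
  proof (rule strict_mono_on_inv_permutes[OF cut_perm_permutes, where I = "{i. i < length f \<and> f ! i \<le> j}"])
    fix s assume "s \<in> {..<j}"
    then show "inv ?d s \<in> {i. i < length f \<and> f ! i \<le> j}"
      using ivin[of s] iv[of s] cut_perm_high[of "inv ?d s"] cut_le_length by fastforce
  qed (use cut_perm_mono in auto)
  show "strict_mono_on {j..<length f} (inv ?d)"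
  proof (rule strict_mono_on_inv_permutes[OF cut_perm_permutes, where I = "{i. i < length f \<and> \<not> f ! i \<le> j}"])
    fix s assume "s \<in> {j..<length f}"
    then show "inv ?d s \<in> {i. i < length f \<and> \<not> f ! i \<le> j}"
      using ivin[of s] iv[of s] cut_perm_low[of "inv ?d s"] by fastforce
  qed (use cut_perm_mono in auto)
qed

lemma cut_perm_nth:
  assumes i: "i < length f"
  shows "f ! i = times_P (lowpart j f) (highpart j f) ! cut_perm j f i"
proof (cases "f ! i \<le> j")
  case True
  then show ?thesis unfolding times_P_def lowpart_def cut_perm_def
    using i nth_filter_rank[OF i, of "\<lambda>v. v \<le> j"] rank_lt[OF i, of "\<lambda>v. v \<le> j"]
    by (simp add: nth_append)
next
  case False
  let ?r = "length (filter (\<lambda>v. j < v) (take i f))"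
  have r: "?r < length (filter (\<lambda>v. j < v) f)" using rank_lt[OF i, of "\<lambda>v. j < v"] False by simp
  have "filter (\<lambda>v. j < v) f ! ?r = f ! i" using nth_filter_rank[OF i, of "\<lambda>v. j < v"] False by simp
  then show ?thesis unfolding times_P_def highpart_def cut_perm_def using i len_low r False
    by (simp add: nth_append)
qed

end

lemma cut_in_cop_terms:
  assumes J: "j \<in> cuts f"
  shows "(lowpart j f, highpart j f) \<in> cop_terms f"
proof -
  have len: "length (lowpart j f) = j" using J unfolding cuts_def by simp
  have "length (lowpart j f) + length (highpart j f) = length f"
    unfolding lowpart_def highpart_def using filter_le_gt_len[of j f] by simp
  moreover have "is_pf (lowpart j f)" "is_pf (highpart j f)" using J unfolding cuts_def by auto
  ultimately show ?thesis unfolding cop_terms_def mem_Collect_eq case_prod_conv len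
    using cut_perm_permutes[OF len] cut_perm_inv_mono[OF len] cut_perm_nth[OF len] by blast
qed

text \<open>Conversely, a decomposition f = (f1 \<times>P f2) \<circ> \<delta> with \<delta>^-1 a shuffle is the cut of f at
  |f1|.  The data of such a decomposition:\<close>
locale shuffle_split =
  fixes f f1 f2 :: "nat list" and \<delta> :: "nat \<Rightarrow> nat"
  assumes pf1: "is_pf f1" and pf2: "is_pf f2" and len: "length f1 + length f2 = length f"
    and perm: "\<delta> permutes {..<length f}"
    and mono_low: "strict_mono_on {..<length f1} (inv \<delta>)"
    and mono_high: "strict_mono_on {length f1..<length f} (inv \<delta>)"
    and nth_eq: "\<forall>i<length f. f ! i = times_P f1 f2 ! \<delta> i"
begin

lemma in_range: "i < length f \<Longrightarrow> \<delta> i < length f"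
  using permutes_in_image[OF perm] by simp

lemma inv_in_range: "s < length f \<Longrightarrow> inv \<delta> s < length f"
  using permutes_in_image[OF permutes_inv[OF perm]] by simp

lemma inv_inverse: "\<delta> (inv \<delta> s) = s"
  using permutes_inverses(1)[OF perm] .

lemma nth_low: "k < length f1 \<Longrightarrow> times_P f1 f2 ! k = f1 ! k"
  unfolding times_P_def by (simp add: nth_append)

lemma nth_high: "k < length f2 \<Longrightarrow> times_P f1 f2 ! (length f1 + k) = f2 ! k + length f1"
  unfolding times_P_def by (simp add: nth_append)

lemma low_iff: assumes i: "i < length f" shows "f ! i \<le> length f1 \<longleftrightarrow> \<delta> i < length f1"
proof (cases "\<delta> i < length f1")
  case True
  then have "f1 ! \<delta> i \<le> length f1" using pf_vals[OF pf1, of "f1 ! \<delta> i"] by simp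
  then show ?thesis using nth_eq i nth_low True by simp
next
  case False
  then obtain k where k: "\<delta> i = length f1 + k" by (metis le_add_diff_inverse not_less)
  then have kl: "k < length f2" using in_range[OF i] len by simp
  then have "1 \<le> f2 ! k" using pf_vals[OF pf2, of "f2 ! k"] by simp
  then show ?thesis using nth_eq i nth_high[OF kl] k False by simp
qed

lemma rank_low:
  assumes i: "i < length f" "\<delta> i < length f1"
  shows "length (filter (\<lambda>v. v \<le> length f1) (take i f)) = \<delta> i"
proof -
  have "length (filter (\<lambda>v. v \<le> length f1) (take i f)) = card {i'. i' < i \<and> f ! i' \<le> length f1}"
    using i by (simp add: len_filter_take_card)
  also have "{i'. i' < i \<and> f ! i' \<le> length f1} = {i'. i' < i \<and> \<delta> i' \<in> {..<length f1}}"
    using low_iff i by auto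
  also have "card \<dots> = card {s \<in> {..<length f1}. s < \<delta> i}"
    by (rule rank_card[OF perm _ mono_low i(1)]) (use len i in auto)
  also have "{s \<in> {..<length f1}. s < \<delta> i} = {..<\<delta> i}" using i by auto
  finally show ?thesis by simp
qed

lemma rank_high:
  assumes i: "i < length f" "\<not> \<delta> i < length f1"
  shows "length (filter (\<lambda>v. length f1 < v) (take i f)) = \<delta> i - length f1"
proof -
  have "length (filter (\<lambda>v. length f1 < v) (take i f)) = card {i'. i' < i \<and> length f1 < f ! i'}"
    using i by (simp add: len_filter_take_card)
  also have "{i'. i' < i \<and> length f1 < f ! i'} = {i'. i' < i \<and> \<delta> i' \<in> {length f1..<length f}}"
  proof (intro set_eqI)
    fix i' show "i' \<in> {i'. i' < i \<and> length f1 < f ! i'} \<longleftrightarrow> i' \<in> {i'. i' < i \<and> \<delta> i' \<in> {length f1..<length f}}"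
    proof (cases "i' < i")
      case True
      then have "i' < length f" using i by simp
      then show ?thesis using True low_iff[of i'] in_range[of i'] by (cases "f ! i' \<le> length f1") auto
    qed simp
  qed
  also have "card \<dots> = card {s \<in> {length f1..<length f}. s < \<delta> i}"
    by (rule rank_card[OF perm _ mono_high i(1)]) (use i in_range in auto)
  also have "{s \<in> {length f1..<length f}. s < \<delta> i} = {length f1..<\<delta> i}" using i in_range[OF i(1)] by auto
  finally show ?thesis by simp
qed

lemma length_low: "length (filter (\<lambda>v. v \<le> length f1) f) = length f1"
proof -
  have "length (filter (\<lambda>v. v \<le> length f1) f) = card {i. i < length f \<and> f ! i \<le> length f1}"
    by (simp add: length_filter_conv_card)
  also have "{i. i < length f \<and> f ! i \<le> length f1} = {i. i < length f \<and> \<delta> i < length f1}"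
    using low_iff by auto
  also have "card \<dots> = card {s. s < length f \<and> s < length f1}" by (rule card_preimage[OF perm])
  also have "{s. s < length f \<and> s < length f1} = {..<length f1}" using len by auto
  finally show ?thesis by simp
qed

lemma length_high: "length (filter (\<lambda>v. length f1 < v) f) = length f2"
  using filter_le_gt_len[of "length f1" f] length_low len by simp

lemma lowpart_eq: "lowpart (length f1) f = f1"
proof (rule nth_equalityI)
  show "length (lowpart (length f1) f) = length f1" unfolding lowpart_def using length_low by simp
  fix k assume "k < length (lowpart (length f1) f)"
  then have k: "k < length f1" unfolding lowpart_def using length_low by simp
  let ?i = "inv \<delta> k"
  have i: "?i < length f" "\<delta> ?i = k" using inv_in_range inv_inverse k len by auto
  have "filter (\<lambda>v. v \<le> length f1) f ! k = f ! ?i"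
    using nth_filter_rank[OF i(1), of "\<lambda>v. v \<le> length f1"] low_iff[OF i(1)] rank_low[OF i(1)] i k by simp
  also have "\<dots> = f1 ! k" using nth_eq i nth_low k by simp
  finally show "lowpart (length f1) f ! k = f1 ! k" unfolding lowpart_def .
qed

lemma highpart_eq: "highpart (length f1) f = f2"
proof (rule nth_equalityI)
  show "length (highpart (length f1) f) = length f2" unfolding highpart_def using length_high by simp
  fix k assume "k < length (highpart (length f1) f)"
  then have k: "k < length f2" unfolding highpart_def using length_high by simp
  let ?i = "inv \<delta> (length f1 + k)"
  have i: "?i < length f" "\<delta> ?i = length f1 + k" using inv_in_range inv_inverse k len by auto
  have "filter (\<lambda>v. length f1 < v) f ! k = f ! ?i"
    using nth_filter_rank[OF i(1), of "\<lambda>v. length f1 < v"] low_iff[OF i(1)] rank_high[OF i(1)] i by simp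
  also have "\<dots> = f2 ! k + length f1" using nth_eq i nth_high k by simp
  finally show "highpart (length f1) f ! k = f2 ! k" unfolding highpart_def using k length_high by simp
qed

end

lemma cop_terms_cut:
  assumes "(f1, f2) \<in> cop_terms f"
  shows "length f1 \<in> cuts f \<and> f1 = lowpart (length f1) f \<and> f2 = highpart (length f1) f"
proof -
  obtain \<delta> where "shuffle_split f f1 f2 \<delta>"
    using assms unfolding cop_terms_def shuffle_split_def by blast
  then interpret shuffle_split f f1 f2 \<delta> .
  show ?thesis unfolding cuts_def using len pf1 pf2 lowpart_eq highpart_eq by simp
qed

lemma cop_terms_eq: "cop_terms f = (\<lambda>j. (lowpart j f, highpart j f)) ` cuts f"
proof (intro set_eqI iffI)
  fix p assume "p \<in> cop_terms f"
  then obtain f1 f2 where p: "p = (f1, f2)" "(f1, f2) \<in> cop_terms f" by (cases p) auto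
  then show "p \<in> (\<lambda>j. (lowpart j f, highpart j f)) ` cuts f" using cop_terms_cut[OF p(2)] by force
qed (auto intro: cut_in_cop_terms)

lemma cut_pair_inj: "inj_on (\<lambda>j. (lowpart j f, highpart j f)) (cuts f)"
proof (rule inj_onI)
  fix x y assume xy: "x \<in> cuts f" "y \<in> cuts f" "(lowpart x f, highpart x f) = (lowpart y f, highpart y f)"
  have a: "length (lowpart x f) = x" "length (lowpart y f) = y" "lowpart x f = lowpart y f"
  proof -
    show "length (lowpart x f) = x" using xy(1) unfolding cuts_def mem_Collect_eq by blast
    show "length (lowpart y f) = y" using xy(2) unfolding cuts_def mem_Collect_eq by blast
    show "lowpart x f = lowpart y f" using xy(3) prod.inject by blast
  qed
  have "x = length (lowpart x f)" using a(1) by simp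
  also have "\<dots> = length (lowpart y f)" using a(3) by simp
  also have "\<dots> = y" using a(2) by simp
  finally show "x = y" .
qed

lemma cuts_Nil: "cuts [] = {0}"
  unfolding cuts_def lowpart_def highpart_def is_pf_iff_pf_count pf_count_def by auto

lemma cop_b_eq: "cop_b f = (\<Sum>j\<in>cuts f. Poly_Mapping.single (lowpart j f, highpart j f) 1)"
proof (cases "f = []")
  case True then show ?thesis by (simp add: cop_b_def cuts_Nil lowpart_def highpart_def)
next
  case False
  then have "cop_b f = (\<Sum>p\<in>cop_terms f. Poly_Mapping.single p 1)" unfolding cop_b_def by simp
  also have "\<dots> = (\<Sum>j\<in>cuts f. Poly_Mapping.single (lowpart j f, highpart j f) 1)"
    unfolding cop_terms_eq by (subst sum.reindex[OF cut_pair_inj]) simp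
  finally show ?thesis .
qed

lemma lookup_cop_b: "Poly_Mapping.lookup (cop_b f :: (nat list \<times> nat list) \<Rightarrow>\<^sub>0 'a::comm_ring_1) (u, v) =
   (if length u \<in> cuts f \<and> lowpart (length u) f = u \<and> highpart (length u) f = v then 1 else 0)"
proof -
  have "Poly_Mapping.lookup (cop_b f) (u, v) = (\<Sum>j\<in>cuts f. if j = length u \<and> lowpart (length u) f = u \<and> highpart (length u) f = v then 1 else 0)"
    unfolding cop_b_eq lookup_sum
  proof (rule sum.cong[OF refl])
    fix j assume "j \<in> cuts f"
    then have "length (lowpart j f) = j" unfolding cuts_def by simp
    then show "Poly_Mapping.lookup (Poly_Mapping.single (lowpart j f, highpart j f) 1) (u, v) =
      (if j = length u \<and> lowpart (length u) f = u \<and> highpart (length u) f = v then 1 else 0)"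
      by (auto simp: lookup_single when_def)
  qed
  also have "\<dots> = (if length u \<in> cuts f \<and> lowpart (length u) f = u \<and> highpart (length u) f = v then 1 else 0)"
  proof (cases "length u \<in> cuts f")
    case True then show ?thesis by (simp add: finite_cuts sum.delta' if_distrib cong: if_cong)
  next
    case False
    then show ?thesis by (auto intro!: sum.neutral)

  qed
  finally show ?thesis .
qed

section \<open>Parkization and cutting at a value\<close>

lemma nless_lowpart: "a \<le> Suc j \<Longrightarrow> nless h a = nless (lowpart j h) a"
  unfolding nless_def lowpart_def by (induction h) auto

lemma nless_highpart: "j < a \<Longrightarrow> nless h a = length (lowpart j h) + nless (highpart j h) (a - j)"
  unfolding nless_def lowpart_def highpart_def by (induction h) auto

lemma nless_plus_window: "a \<le> Suc j \<Longrightarrow> nless h a + length (filter (\<lambda>y. a \<le> y \<and> y \<le> j) h) = length (lowpart j h)"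
  unfolding nless_def lowpart_def by (induction h) auto

text \<open>The condition under which the cut at j is compatible with parkization: no window [a, j]
  contains more than j + 1 - a entries.\<close>
definition low_bounded :: "nat \<Rightarrow> nat list \<Rightarrow> bool" where
  "low_bounded j h \<longleftrightarrow> (\<forall>a\<in>set h. a \<le> j \<longrightarrow> length (filter (\<lambda>y. a \<le> y \<and> y \<le> j) h) \<le> Suc j - a)"

lemma set_lowpart: "set (lowpart j h) = {v \<in> set h. v \<le> j}" unfolding lowpart_def by auto
lemma set_highpart: "set (highpart j h) = (\<lambda>v. v - j) ` {v \<in> set h. j < v}" unfolding highpart_def by auto

lemma parkval_lowpart: assumes "v \<le> j" shows "parkval h v = parkval (lowpart j h) v"
proof -
  have S: "{a \<in> set h. a \<le> v} = {a \<in> set (lowpart j h). a \<le> v}" using assms by (auto simp: set_lowpart)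
  have "\<And>a. a \<in> {a \<in> set h. a \<le> v} \<Longrightarrow> nless h a + 1 + v - a = nless (lowpart j h) a + 1 + v - a"
    using assms nless_lowpart[of _ j h] by simp
  then show ?thesis unfolding parkval_def S by (metis (no_types, lifting) S image_cong)
qed

lemma parkval_highpart: assumes C: "low_bounded j h" and v: "v \<in> set h" "j < v"
  shows "parkval h v = length (lowpart j h) + parkval (highpart j h) (v - j)"
proof (rule antisym)
  let ?i = "length (lowpart j h)" and ?H = "highpart j h"
  have vH: "v - j \<in> set ?H" using v by (auto simp: set_highpart)
  obtain b where b: "b \<in> set ?H" "b \<le> v - j" "parkval ?H (v - j) = nless ?H b + 1 + (v - j) - b"
    using parkval_attained[OF vH order_refl] by blast
  obtain a where a: "a \<in> set h" "j < a" "b = a - j" using b(1) by (auto simp: set_highpart)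
  have "parkval h v \<le> nless h a + 1 + v - a" by (rule parkval_le) (use a b v in auto)
  also have "\<dots> = ?i + (nless ?H b + 1 + (v - j) - b)" using nless_highpart[OF a(2), of h] a b v by (simp add: add.assoc)
  finally show "parkval h v \<le> ?i + parkval ?H (v - j)" using b by simp
next
  let ?i = "length (lowpart j h)" and ?H = "highpart j h"
  have vH: "v - j \<in> set ?H" using v by (auto simp: set_highpart)
  obtain a where a: "a \<in> set h" "a \<le> v" "parkval h v = nless h a + 1 + v - a"
    using parkval_attained[OF v(1) order_refl] by blast
  show "?i + parkval ?H (v - j) \<le> parkval h v"
  proof (cases "a \<le> j")
    case True
    have "length (filter (\<lambda>y. a \<le> y \<and> y \<le> j) h) \<le> Suc j - a" using C a True unfolding low_bounded_def by blast
    moreover have "nless h a + length (filter (\<lambda>y. a \<le> y \<and> y \<le> j) h) = ?i" using True by (intro nless_plus_window) simp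
    ultimately have "?i + (v - j) \<le> parkval h v" using a True v by linarith
    moreover have "parkval ?H (v - j) \<le> v - j" by (rule parkval_le_self[OF _ vH]) (auto simp: set_highpart)
    ultimately show ?thesis by linarith
  next
    case False
    have aH: "a - j \<in> set ?H" using a False by (auto simp: set_highpart)
    have "parkval ?H (v - j) \<le> nless ?H (a - j) + 1 + (v - j) - (a - j)" by (rule parkval_le[OF aH]) (use a False in auto)
    moreover have "nless h a = ?i + nless ?H (a - j)" using nless_highpart False by simp
    ultimately show ?thesis using a False by simp
  qed
qed

lemma parkval_lowpart_le_length: "v \<in> set (lowpart j h) \<Longrightarrow> parkval (lowpart j h) v \<le> length (lowpart j h)"
  using parkval_le_nless nless_less_length by (metis Suc_leI le_trans)

lemma park_cut:
  assumes C: "low_bounded j h"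
  defines "i \<equiv> length (lowpart j h)"
  shows "lowpart i (park h) = park (lowpart j h)" and "highpart i (park h) = park (highpart j h)"
    and "length (lowpart i (park h)) = i"
proof -
  have lowiff: "\<And>v. v \<in> set h \<Longrightarrow> parkval h v \<le> i \<longleftrightarrow> v \<le> j"
  proof -
    fix v assume v: "v \<in> set h"
    show "parkval h v \<le> i \<longleftrightarrow> v \<le> j"
    proof (cases "v \<le> j")
      case True
      then have vv: "v \<in> set (lowpart j h)" using v by (simp add: set_lowpart)
      then show ?thesis using parkval_lowpart[OF True, of h] parkval_lowpart_le_length[OF vv] True unfolding i_def by simp
    next
      case False
      have "v - j \<in> set (highpart j h)" using v False by (auto simp: set_highpart)
      then have "1 \<le> parkval (highpart j h) (v - j)" by (rule parkval_ge1)
      then show ?thesis using parkval_highpart[OF C v] False unfolding i_def by simp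
    qed
  qed
  have e1: "lowpart i (park h) = map (parkval h) (lowpart j h)"
    unfolding lowpart_def park_eq_map_parkval filter_map o_def using lowiff by (simp cong: filter_cong)
  also have "\<dots> = map (parkval (lowpart j h)) (lowpart j h)" by (rule map_cong[OF refl]) (auto simp: set_lowpart intro: parkval_lowpart)
  finally show p1: "lowpart i (park h) = park (lowpart j h)" by (simp add: park_eq_map_parkval)
  show "length (lowpart i (park h)) = i" using p1 by (simp add: i_def)
  have "highpart i (park h) = map (\<lambda>v. parkval h v - i) (filter (\<lambda>v. j < v) h)"
    unfolding highpart_def park_eq_map_parkval filter_map o_def map_map using lowiff by (simp add: not_le[symmetric] cong: filter_cong)
  also have "\<dots> = map (\<lambda>v. parkval (highpart j h) (v - j)) (filter (\<lambda>v. j < v) h)"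
    by (rule map_cong[OF refl]) (auto simp: parkval_highpart[OF C] i_def)
  also have "\<dots> = park (highpart j h)" unfolding park_eq_map_parkval highpart_def by simp
  finally show "highpart i (park h) = park (highpart j h)" .
qed

text \<open>Interleaving A and B following the pattern of small (\<le> i) and large entries of f; this
  reconstructs a word from its two parts.\<close>
fun merge_by :: "nat \<Rightarrow> nat list \<Rightarrow> nat list \<Rightarrow> nat list \<Rightarrow> nat list" where
  "merge_by i [] A B = []"
| "merge_by i (x # f) A B = (if x \<le> i then hd A # merge_by i f (tl A) B else hd B # merge_by i f A (tl B))"

lemma merge_by_length[simp]: "length (merge_by i f A B) = length f"
  by (induction f arbitrary: A B) auto

lemma merge_by_filter:
  assumes "\<forall>a\<in>set A. a \<le> j" "\<forall>b\<in>set B. j < b"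
    "length A = length (filter (\<lambda>v. v \<le> i) f)" "length B = length (filter (\<lambda>v. i < v) f)"
  shows "filter (\<lambda>v. v \<le> j) (merge_by i f A B) = A \<and> filter (\<lambda>v. j < v) (merge_by i f A B) = B"
  using assms
proof (induction f arbitrary: A B)
  case Nil then show ?case by simp
next
  case (Cons x f)
  show ?case
  proof (cases "x \<le> i")
    case True
    then obtain a A' where A: "A = a # A'" using Cons.prems(3) by (cases A) auto
    then show ?thesis using Cons.IH[of A' B] Cons.prems True by auto
  next
    case False
    then obtain b B' where B: "B = b # B'" using Cons.prems(4) by (cases B) auto
    then show ?thesis using Cons.IH[of A B'] Cons.prems False by auto
  qed
qed

lemma merge_by_nth:
  assumes "length A = length (filter (\<lambda>v. v \<le> i) f)" "length B = length (filter (\<lambda>v. i < v) f)" "p < length f"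
  shows "merge_by i f A B ! p = (if f ! p \<le> i then A ! length (filter (\<lambda>v. v \<le> i) (take p f))
                            else B ! length (filter (\<lambda>v. i < v) (take p f)))"
  using assms
proof (induction f arbitrary: A B p)
  case Nil then show ?case by simp
next
  case (Cons x f)
  show ?case
  proof (cases "x \<le> i")
    case True
    then obtain a A' where A: "A = a # A'" using Cons.prems(1) by (cases A) auto
    show ?thesis
    proof (cases p)
      case 0 then show ?thesis using A True by simp
    next
      case (Suc p') then show ?thesis using Cons.IH[of A' B p'] Cons.prems A True by auto
    qed
  next
    case False
    then obtain b B' where B: "B = b # B'" using Cons.prems(2) by (cases B) auto
    show ?thesis
    proof (cases p)
      case 0 then show ?thesis using B False by simp
    next
      case (Suc p') then show ?thesis using Cons.IH[of A B' p'] Cons.prems B False by auto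
    qed
  qed
qed

lemma merge_by_filter_eq:
  assumes "length h = length f" "\<forall>p<length f. h ! p \<le> j \<longleftrightarrow> f ! p \<le> i"
  shows "merge_by i f (filter (\<lambda>v. v \<le> j) h) (filter (\<lambda>v. j < v) h) = h"
  using assms
proof (induction f arbitrary: h)
  case Nil then show ?case by simp
next
  case (Cons x f)
  then obtain y h' where h: "h = y # h'" by (cases h) auto
  have yx: "y \<le> j \<longleftrightarrow> x \<le> i" using Cons.prems(2) h by force
  have IH: "merge_by i f (filter (\<lambda>v. v \<le> j) h') (filter (\<lambda>v. j < v) h') = h'"
    using Cons.prems h by (intro Cons.IH) force+
  show ?case using h yx IH by (cases "x \<le> i") auto
qed

context
  fixes i j :: nat and f A B :: "nat list"
  assumes iJ: "length (lowpart i f) = i"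
    and A: "\<forall>a\<in>set A. a \<le> j" and B: "\<forall>b\<in>set B. j < b"
    and lA: "length A = length (lowpart i f)" and lB: "length B = length (filter (\<lambda>v. i < v) f)"
    and C: "low_bounded j (merge_by i f A B)" and pA: "park A = lowpart i f"
    and pB: "park (map (\<lambda>v. v - j) B) = highpart i f"
begin

lemma merge_by_lowpart: "lowpart j (merge_by i f A B) = A"
  and merge_by_highpart: "highpart j (merge_by i f A B) = map (\<lambda>v. v - j) B"
  using merge_by_filter[OF A B lA[unfolded lowpart_def] lB] unfolding lowpart_def highpart_def by auto

lemma park_merge_by_nth_low:
  assumes p: "p < length f" and low: "f ! p \<le> i"
  shows "park (merge_by i f A B) ! p = f ! p"
proof -
  let ?h = "merge_by i f A B" and ?r = "length (filter (\<lambda>v. v \<le> i) (take p f))"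
  have r: "?r < length A" using rank_lt[OF p, of "\<lambda>v. v \<le> i"] low lA unfolding lowpart_def by simp
  have hp: "?h ! p = A ! ?r" using merge_by_nth[OF lA[unfolded lowpart_def] lB p] low by simp
  have "park ?h ! p = parkval ?h (A ! ?r)" using p hp by (simp add: park_eq_map_parkval)
  also have "\<dots> = parkval A (A ! ?r)" using parkval_lowpart[of "A ! ?r" j ?h] A r merge_by_lowpart by simp
  also have "\<dots> = park A ! ?r" using r by (simp add: park_eq_map_parkval)
  also have "\<dots> = f ! p" using pA nth_filter_rank[OF p, of "\<lambda>v. v \<le> i"] low unfolding lowpart_def by simp
  finally show ?thesis .
qed

lemma park_merge_by_nth_high:
  assumes p: "p < length f" and high: "\<not> f ! p \<le> i"
  shows "park (merge_by i f A B) ! p = f ! p"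
proof -
  let ?h = "merge_by i f A B" and ?r = "length (filter (\<lambda>v. i < v) (take p f))"
  have r: "?r < length B" using rank_lt[OF p, of "\<lambda>v. i < v"] high lB by simp
  have hp: "?h ! p = B ! ?r" using merge_by_nth[OF lA[unfolded lowpart_def] lB p] high by simp
  have "?h ! p \<in> set ?h" using p by simp
  then have "park ?h ! p = length A + parkval (map (\<lambda>v. v - j) B) (B ! ?r - j)"
    using p hp parkval_highpart[OF C, of "B ! ?r"] B r merge_by_lowpart merge_by_highpart
    by (simp add: park_eq_map_parkval)
  also have "parkval (map (\<lambda>v. v - j) B) (B ! ?r - j) = park (map (\<lambda>v. v - j) B) ! ?r"
    using r by (simp add: park_eq_map_parkval)
  also have "\<dots> = filter (\<lambda>v. i < v) f ! ?r - i" using pB r lB unfolding highpart_def by simp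
  also have "filter (\<lambda>v. i < v) f ! ?r = f ! p" using nth_filter_rank[OF p, of "\<lambda>v. i < v"] high by simp
  finally show ?thesis using lA iJ high by simp
qed

lemma park_merge_by: "park (merge_by i f A B) = f"
  by (rule nth_equalityI) (auto intro: park_merge_by_nth_low park_merge_by_nth_high)

end

lemma is_pf_cut_parts:
  assumes w: "is_pf w" and l: "length (lowpart j w) = j"
  shows "is_pf (lowpart j w)" "is_pf (highpart j w)"
proof -
  have pw: "pf_count w" using w is_pf_iff_pf_count by simp
  show "is_pf (lowpart j w)" unfolding is_pf_iff_pf_count pf_count_def
  proof
    fix a assume "a \<in> set (lowpart j w)"
    then have a: "a \<in> set w" "a \<le> j" by (auto simp: set_lowpart)
    then have "1 \<le> a \<and> a \<le> Suc (nless w a)" using pw unfolding pf_count_def by blast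
    then show "1 \<le> a \<and> a \<le> Suc (nless (lowpart j w) a)" using nless_lowpart[of a j w] a by simp
  qed
  show "is_pf (highpart j w)" unfolding is_pf_iff_pf_count pf_count_def
  proof
    fix b assume "b \<in> set (highpart j w)"
    then obtain a where a: "a \<in> set w" "j < a" "b = a - j" by (auto simp: set_highpart)
    have "a \<le> Suc (nless w a)" using pw a unfolding pf_count_def by simp
    moreover have "nless w a = j + nless (highpart j w) (a - j)" using nless_highpart[OF a(2), of w] l by simp
    ultimately show "1 \<le> b \<and> b \<le> Suc (nless (highpart j w) b)" using a unfolding a(3) by (intro conjI; linarith)
  qed
qed

lemma is_pf_of_cut_parts:
  assumes p1: "is_pf (lowpart j w)" and p2: "is_pf (highpart j w)" and l: "length (lowpart j w) = j"
  shows "is_pf w"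
  unfolding is_pf_iff_pf_count pf_count_def
proof
  fix a assume a: "a \<in> set w"
  show "1 \<le> a \<and> a \<le> Suc (nless w a)"
  proof (cases "a \<le> j")
    case True
    then have "a \<in> set (lowpart j w)" using a by (simp add: set_lowpart)
    then show ?thesis using p1 nless_lowpart[of a j w] True unfolding is_pf_iff_pf_count pf_count_def by simp
  next
    case False
    then have "a - j \<in> set (highpart j w)" using a by (auto simp: set_highpart)
    then have "a - j \<le> Suc (nless (highpart j w) (a - j))" using p2 unfolding is_pf_iff_pf_count pf_count_def by simp
    then show ?thesis using nless_highpart[of j a w] l False by simp
  qed
qed

lemma low_bounded_sub:
  assumes w: "is_pf w" and l: "length (lowpart j w) = j" and sub: "mset h \<subseteq># mset w"
  shows "low_bounded j h"
  unfolding low_bounded_def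
proof (intro ballI impI)
  fix a assume a: "a \<in> set h" "a \<le> j"
  have aw: "a \<in> set w" using a set_subset_of_subseteq_mset[OF sub] by auto
  have "a \<le> Suc (nless w a)" using w aw unfolding is_pf_iff_pf_count pf_count_def by simp
  moreover have "nless w a + length (filter (\<lambda>y. a \<le> y \<and> y \<le> j) w) = j" using nless_plus_window[of a j w] a l by simp
  moreover have "length (filter (\<lambda>y. a \<le> y \<and> y \<le> j) h) \<le> length (filter (\<lambda>y. a \<le> y \<and> y \<le> j) w)"
    by (rule length_filter_subseteq_mset[OF sub])
  ultimately show "length (filter (\<lambda>y. a \<le> y \<and> y \<le> j) h) \<le> Suc j - a" by linarith
qed

definition max0 :: "nat list \<Rightarrow> nat" where
  "max0 x = (if x = [] then 0 else Max (set x))"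

lemma max0_highpart:
  assumes "h \<noteq> []" "\<forall>y\<in>set h. 1 \<le> y"
  shows "highpart j h \<noteq> [] \<Longrightarrow> Max (set h) = max0 (highpart j h) + j"
    and "highpart j h = [] \<Longrightarrow> Max (set h) \<le> j"
    and "highpart j h \<noteq> [] \<Longrightarrow> 1 \<le> max0 (highpart j h)"
proof -
  have mh: "Max (set h) \<in> set h" using assms by simp
  show "highpart j h = [] \<Longrightarrow> Max (set h) \<le> j"
    using mh unfolding highpart_def by (auto simp: filter_empty_conv)
  assume ne: "highpart j h \<noteq> []"
  then obtain a where a: "a \<in> set h" "j < a" unfolding highpart_def by (auto simp: filter_empty_conv)
  then have jm: "j < Max (set h)" using mh by (meson Max_ge List.finite_set less_le_trans)
  have "Max (set (highpart j h)) = Max (set h) - j"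
  proof (rule Max_eqI)
    show "Max (set h) - j \<in> set (highpart j h)" using mh jm by (auto simp: set_highpart)
    fix y assume "y \<in> set (highpart j h)"
    then obtain b where "b \<in> set h" "y = b - j" by (auto simp: set_highpart)
    then show "y \<le> Max (set h) - j" by (simp add: diff_le_mono)
  qed simp
  then show "Max (set h) = max0 (highpart j h) + j" using ne jm unfolding max0_def by simp
  show "1 \<le> max0 (highpart j h)" using ne \<open>Max (set (highpart j h)) = Max (set h) - j\<close> jm unfolding max0_def by simp
qed

lemma compare_max_highpart:
  assumes h: "h \<noteq> []" "\<forall>y\<in>set h. 1 \<le> y" and k: "k \<noteq> []" "\<forall>y\<in>set k. 1 \<le> y"
    and ne: "highpart j h \<noteq> [] \<or> highpart j k \<noteq> []"
  shows "(Max (set h) < Max (set k) \<longleftrightarrow> max0 (highpart j h) < max0 (highpart j k)) \<and>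
         (Max (set h) = Max (set k) \<longleftrightarrow> max0 (highpart j h) = max0 (highpart j k))"
  using max0_highpart[OF h, of j] max0_highpart[OF k, of j] ne
  by (cases "highpart j h = []"; cases "highpart j k = []") (auto simp: max0_def)

lemma cap_split: "cap h k = cap (lowpart j h) (lowpart j k) + cap (highpart j h) (highpart j k)"
proof -
  let ?s = "\<lambda>v. v - j"
  have e: "set h \<inter> set k = (set (lowpart j h) \<inter> set (lowpart j k)) \<union> {v \<in> set h \<inter> set k. j < v}"
    by (auto simp: set_lowpart)
  have inj: "inj_on ?s {v. j < v}" by (auto simp: inj_on_def)
  have "set (highpart j h) \<inter> set (highpart j k) = ?s ` {v \<in> set h \<inter> set k. j < v}"
    unfolding set_highpart using inj by (auto simp: inj_on_def)
  moreover have "card (?s ` {v \<in> set h \<inter> set k. j < v}) = card {v \<in> set h \<inter> set k. j < v}"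
  proof (rule card_image)
    show "inj_on ?s {v \<in> set h \<inter> set k. j < v}" by (rule inj_on_subset[OF inj]) auto
  qed
  moreover have "card (set h \<inter> set k) = card (set (lowpart j h) \<inter> set (lowpart j k)) + card {v \<in> set h \<inter> set k. j < v}"
  proof -
    have "card (set h \<inter> set k) = card ((set (lowpart j h) \<inter> set (lowpart j k)) \<union> {v \<in> set h \<inter> set k. j < v})"
      using e by (rule arg_cong)
    also have "\<dots> = card (set (lowpart j h) \<inter> set (lowpart j k)) + card {v \<in> set h \<inter> set k. j < v}"
      by (rule card_Un_disjoint) (auto simp: set_lowpart)
    finally show ?thesis .
  qed
  ultimately show ?thesis unfolding cap_def by simp
qed

lemma parkval_low_iff: assumes C: "low_bounded j h" and v: "v \<in> set h"
  shows "parkval h v \<le> length (lowpart j h) \<longleftrightarrow> v \<le> j"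
proof (cases "v \<le> j")
  case True
  then have vv: "v \<in> set (lowpart j h)" using v by (simp add: set_lowpart)
  have e: "parkval h v = parkval (lowpart j h) v" by (rule parkval_lowpart[OF True])
  show ?thesis unfolding e using parkval_lowpart_le_length[OF vv] True by simp
next
  case False
  have "v - j \<in> set (highpart j h)" using v False by (auto simp: set_highpart)
  then have "1 \<le> parkval (highpart j h) (v - j)" by (rule parkval_ge1)
  then show ?thesis using parkval_highpart[OF C v] False by simp
qed

lemma filter_greater_highpart: "filter (\<lambda>v. j < v) h = map (\<lambda>v. v + j) (highpart j h)"
proof -
  have "map (\<lambda>v. v + j) (highpart j h) = map (\<lambda>v. v - j + j) (filter (\<lambda>v. j < v) h)"
    unfolding highpart_def by simp
  also have "\<dots> = filter (\<lambda>v. j < v) h" by (rule map_idI) simp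
  finally show ?thesis by simp
qed

lemma lowpart_append: "lowpart j (h @ k) = lowpart j h @ lowpart j k" unfolding lowpart_def by simp
lemma highpart_append: "highpart j (h @ k) = highpart j h @ highpart j k" unfolding highpart_def by simp

lemma length_highpart: "length (highpart j h) = length h - length (lowpart j h)"
  unfolding lowpart_def highpart_def using filter_le_gt_len[of j h] by simp

lemma length_lowpart_le: "length (lowpart j h) \<le> length h" unfolding lowpart_def by simp

lemma cuts_pf_iff: "is_pf w \<Longrightarrow> j \<in> cuts w \<longleftrightarrow> length (lowpart j w) = j"
  unfolding cuts_def using is_pf_cut_parts[of w j] length_lowpart_le[of j w] by auto

lemma pf_ge1: "is_pf w \<Longrightarrow> y \<in> set w \<Longrightarrow> 1 \<le> y"
  using pf_vals by blast

lemma mset_app_sub: "mset h \<subseteq># mset (h @ k)" "mset k \<subseteq># mset (h @ k)"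
  by simp_all

lemma highpart_Nil_lowpart: "highpart j h = [] \<Longrightarrow> lowpart j h = h"
  unfolding lowpart_def highpart_def by (auto simp: filter_empty_conv not_less intro!: filter_True)

lemma highpart_Nil_iff: "highpart j h = [] \<longleftrightarrow> (\<forall>y\<in>set h. y \<le> j)"
  unfolding highpart_def by (auto simp: filter_empty_conv not_less)

lemma length_lowpart_cut: "i \<in> cuts f \<Longrightarrow> length (lowpart i f) = i" unfolding cuts_def by simp
lemma length_highpart_cut: "i \<in> cuts f \<Longrightarrow> length (highpart i f) = length f - i"
  using length_highpart[of i f] length_lowpart_cut by simp

definition lin :: "('k \<Rightarrow> 'a::comm_ring_1) \<Rightarrow> ('k \<Rightarrow>\<^sub>0 'a) \<Rightarrow> 'a" where
  "lin G t = (\<Sum>p\<in>Poly_Mapping.keys t. Poly_Mapping.lookup t p * G p)"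

lemma lin_superset: "finite K \<Longrightarrow> Poly_Mapping.keys t \<subseteq> K \<Longrightarrow> lin G t = (\<Sum>p\<in>K. Poly_Mapping.lookup t p * G p)"
  unfolding lin_def by (rule sum.mono_neutral_left) (auto simp: in_keys_iff)

lemma lin_add: "lin G (a + b) = lin G a + lin G b"
proof -
  let ?K = "Poly_Mapping.keys a \<union> Poly_Mapping.keys b"
  have f: "finite ?K" by simp
  have "lin G (a + b) = (\<Sum>p\<in>?K. Poly_Mapping.lookup (a + b) p * G p)"
    by (rule lin_superset[OF f]) (rule keys_add)
  also have "\<dots> = (\<Sum>p\<in>?K. Poly_Mapping.lookup a p * G p) + (\<Sum>p\<in>?K. Poly_Mapping.lookup b p * G p)"
    by (simp add: lookup_add distrib_right sum.distrib)
  also have "\<dots> = lin G a + lin G b"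
    using lin_superset[OF f, of a G] lin_superset[OF f, of b G] by simp
  finally show ?thesis .
qed

lemma lin_zero[simp]: "lin G 0 = 0" unfolding lin_def by simp

lemma lin_smult: "lin G (smult_pm c a) = c * lin G a"
proof -
  have "lin G (smult_pm c a) = (\<Sum>p\<in>Poly_Mapping.keys a. Poly_Mapping.lookup (smult_pm c a) p * G p)"
    by (rule lin_superset) (simp_all add: keys_smult)
  then show ?thesis unfolding lin_def by (simp add: sum_distrib_left mult_ac)
qed

lemma lin_single: "lin G (Poly_Mapping.single k c) = c * G k"
proof -
  have "lin G (Poly_Mapping.single k c) = (\<Sum>p\<in>{k}. Poly_Mapping.lookup (Poly_Mapping.single k c) p * G p)"
    by (rule lin_superset) auto
  then show ?thesis by simp
qed

lemma lin_sum: "finite I \<Longrightarrow> lin G (\<Sum>i\<in>I. X i) = (\<Sum>i\<in>I. lin G (X i))"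
  by (induction I rule: finite_induct) (simp_all add: lin_add)

lemma lin_cong: "(\<And>p. p \<in> Poly_Mapping.keys t \<Longrightarrow> G p = G' p) \<Longrightarrow> lin G t = lin G' t"
  unfolding lin_def by simp

lemma lin_sumG: "finite I \<Longrightarrow> lin (\<lambda>p. \<Sum>i\<in>I. H i p) t = (\<Sum>i\<in>I. lin (H i) t)"
  unfolding lin_def by (simp add: sum_distrib_left sum.swap[of _ I])

lemma lookup_Cop: "Poly_Mapping.lookup (Cop x) p0 = lin (\<lambda>f. Poly_Mapping.lookup (cop_b f) p0) x"
  unfolding Cop_def lin_def by (simp add: lookup_sum)

lemma lin_cop_b: "lin H (cop_b f) = (\<Sum>j\<in>cuts f. H (lowpart j f, highpart j f))"
  unfolding cop_b_eq by (simp add: lin_sum finite_cuts lin_single)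

lemma lin_Cop: "lin H (Cop x) = lin (\<lambda>f. lin H (cop_b f)) x"
  by (simp add: Cop_def lin_sum lin_smult lin_def[of _ x])

lemma lin_bilin: "lin H (bilin B x y) = lin (\<lambda>f. lin (\<lambda>g. lin H (B f g)) y) x"
  unfolding bilin_def lin_def[of _ x] lin_def[of _ y]
  by (simp add: lin_sum lin_smult sum_distrib_left mult_ac)

lemma lin_park_sum: "lin H (park_sum R E f g) = (\<Sum>(h, k)\<in>park_pairs R f g. E h k * H (h @ k))"
  unfolding park_sum_def by (simp add: lin_sum park_pairs_finite case_prod_beta lin_smult lin_single)

lemma lookup_bilinT: "Poly_Mapping.lookup (bilinT B s t) p0 = lin (\<lambda>p. lin (\<lambda>r. Poly_Mapping.lookup (B p r) p0) t) s"
  unfolding bilinT_def lin_def by (simp add: lookup_sum sum_distrib_left mult_ac)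

lemma lookup_tens: "Poly_Mapping.lookup (tens a b) (u, v) = Poly_Mapping.lookup a u * Poly_Mapping.lookup b v"
proof -
  have "Poly_Mapping.lookup (tens a b) (u, v) = lin (\<lambda>s. lin (\<lambda>t. if (s, t) = (u, v) then 1 else 0) b) a"
    unfolding tens_def bilin_def lin_def by (simp add: lookup_sum lookup_single when_def sum_distrib_left mult_ac)
  also have "\<dots> = lin (\<lambda>s. if s = u then Poly_Mapping.lookup b v else 0) a"
  proof (rule lin_cong)
    fix s
    have "lin (\<lambda>t. if (s, t) = (u, v) then 1 else 0) b = (if s = u then lin (\<lambda>t. if t = v then 1 else 0) b else 0)"
      unfolding lin_def by simp
    also have "lin (\<lambda>t. if t = v then 1 else 0) b = Poly_Mapping.lookup b v"
      unfolding lin_def by (simp add: sum.delta in_keys_iff if_distrib[where f="\<lambda>x. _ * x"] cong: if_cong)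
    finally show "lin (\<lambda>t. if (s, t) = (u, v) then 1 else 0) b = (if s = u then Poly_Mapping.lookup b v else 0)" .
  qed
  also have "\<dots> = Poly_Mapping.lookup a u * Poly_Mapping.lookup b v"
    unfolding lin_def by (simp add: sum.delta in_keys_iff if_distrib[where f="\<lambda>x. _ * x"] cong: if_cong)
  finally show ?thesis .
qed

lemma prec_b_park_sum: "prec_b q = park_sum (\<lambda>a b. a > b) (\<lambda>h k. q ^ cap h k)"
  unfolding prec_b_def park_sum_def by (intro ext) simp
lemma succ_b_park_sum: "succ_b q = park_sum (\<lambda>a b. a < b) (\<lambda>h k. q ^ cap h k)"
  unfolding succ_b_def park_sum_def by (intro ext) simp
lemma dot_b_park_sum: "dot_b q = park_sum (\<lambda>a b. a = b) (\<lambda>h k. q ^ (cap h k - 1))"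
  unfolding dot_b_def park_sum_def by (intro ext) simp

lemma park_len_eq: "park x = a \<Longrightarrow> length x = length a"
  by (metis park_length)

lemma pf_eq_iff: "is_pf c \<Longrightarrow> (is_pf u \<and> park u = c) \<longleftrightarrow> u = c"
  using park_pf by auto

lemma cap_Nil[simp]: "cap [] x = 0" "cap x [] = 0" unfolding cap_def by auto

lemma cap_pos_if_Max_eq: "xs \<noteq> [] \<Longrightarrow> ys \<noteq> [] \<Longrightarrow> Max (set xs) = Max (set ys) \<Longrightarrow> 1 \<le> cap xs ys"
proof -
  assume ne: "xs \<noteq> []" "ys \<noteq> []" and eq: "Max (set xs) = Max (set ys)"
  have "Max (set xs) \<in> set xs" "Max (set ys) \<in> set ys" using ne by simp_all
  then have "set xs \<inter> set ys \<noteq> {}" using eq by auto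
  then show ?thesis unfolding cap_def by (simp add: card_gt_0_iff Suc_le_eq)
qed

lemma lookup_park_sum_nonempty:
  assumes "a \<noteq> []" "c \<noteq> []"
  shows "Poly_Mapping.lookup (park_sum R E a c) v =
   (if length v = length a + length c \<and> is_pf v \<and> park (take (length a) v) = a \<and> park (drop (length a) v) = c \<and>
       R (max0 (take (length a) v)) (max0 (drop (length a) v)) then E (take (length a) v) (drop (length a) v) else 0)"
proof (cases "park (take (length a) v) = a \<and> park (drop (length a) v) = c")
  case True
  from True have "length (park (take (length a) v)) = length a" "length (park (drop (length a) v)) = length c"
    by simp_all
  then have l: "length (take (length a) v) = length a" "length (drop (length a) v) = length c"
    by simp_all
  then have "take (length a) v \<noteq> []" "drop (length a) v \<noteq> []" "length v = length a + length c"
    using assms by auto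
  then show ?thesis using True by (simp add: lookup_park_sum max0_def)
next
  case False then show ?thesis by (auto simp: lookup_park_sum)
qed

lemma max0_ge1: "is_pf v \<Longrightarrow> x \<noteq> [] \<Longrightarrow> set x \<subseteq> set v \<Longrightarrow> 1 \<le> max0 x"
proof -
  assume a: "is_pf v" "x \<noteq> []" "set x \<subseteq> set v"
  then have "Max (set x) \<in> set v" by auto
  then show ?thesis using pf_vals[OF a(1)] a(2) by (simp add: max0_def)
qed

lemma lookup_star_nonempty:
  assumes an: "a \<noteq> []" and cn: "c \<noteq> []"
  shows "Poly_Mapping.lookup (prec_b q a c + smult_pm q (dot_b q a c) + succ_b q a c) u =
   (if length u = length a + length c \<and> is_pf u \<and> park (take (length a) u) = a \<and> park (drop (length a) u) = c
    then q ^ cap (take (length a) u) (drop (length a) u) else 0)"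
proof (cases "length u = length a + length c \<and> is_pf u \<and> park (take (length a) u) = a \<and> park (drop (length a) u) = c")
  case True
  let ?x = "take (length a) u" and ?y = "drop (length a) u"
  have ne: "?x \<noteq> []" "?y \<noteq> []" using True an cn by auto
  have "max0 ?x = max0 ?y \<Longrightarrow> q * q ^ (cap ?x ?y - 1) = q ^ cap ?x ?y"
    using cap_pos_if_Max_eq[OF ne] ne by (simp add: q_times_power_pred max0_def)
  then show ?thesis using True
    by (cases "max0 ?x" "max0 ?y" rule: linorder_cases)
       (simp_all add: prec_b_park_sum succ_b_park_sum dot_b_park_sum lookup_add lookup_park_sum_nonempty[OF an cn])
next
  case False
  then show ?thesis
    by (auto simp: prec_b_park_sum succ_b_park_sum dot_b_park_sum lookup_add lookup_park_sum_nonempty[OF an cn])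
qed

lemma lookup_ext_star:
  assumes pa: "is_pf a" and pc: "is_pf c"
  shows "Poly_Mapping.lookup (ext_star q a c) u =
   (if length u = length a + length c \<and> is_pf u \<and> park (take (length a) u) = a \<and> park (drop (length a) u) = c
    then q ^ cap (take (length a) u) (drop (length a) u) else 0)"
proof (cases "a = []")
  case True
  then show ?thesis using pf_eq_iff[OF pc, of u] by (auto simp: ext_star_def lookup_single when_def dest: park_len_eq)
next
  case an: False
  show ?thesis
  proof (cases "c = []")
    case True
    have "(length u = length a \<and> is_pf u \<and> park u = a) \<longleftrightarrow> u = a" using pf_eq_iff[OF pa, of u] by auto
    then show ?thesis using True an by (auto simp: ext_star_def lookup_single when_def)
  next
    case False
    then show ?thesis using lookup_star_nonempty[OF an False, of q u] an by (simp add: ext_star_def)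
  qed
qed

lemma lookup_ext_succ:
  assumes pa: "is_pf a" and pc: "is_pf c" and ne: "a \<noteq> [] \<or> c \<noteq> []"
  shows "Poly_Mapping.lookup (ext_succ q a c) v =
   (if length v = length a + length c \<and> is_pf v \<and> park (take (length a) v) = a \<and> park (drop (length a) v) = c \<and>
       max0 (take (length a) v) < max0 (drop (length a) v) then q ^ cap (take (length a) v) (drop (length a) v) else 0)"
proof (cases "a = []")
  case True
  then have cn: "c \<noteq> []" using ne by simp
  have "v = c \<Longrightarrow> 1 \<le> max0 v" using max0_ge1[of v v] pc cn by simp
  then show ?thesis using True pf_eq_iff[OF pc, of v] by (auto simp: ext_succ_def lookup_single when_def max0_def dest: park_len_eq)
next
  case an: False
  show ?thesis
  proof (cases "c = []")
    case True then show ?thesis using an by (auto simp: ext_succ_def max0_def)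
  next
    case False then show ?thesis using an by (simp add: ext_succ_def succ_b_park_sum lookup_park_sum_nonempty)
  qed
qed

lemma lookup_ext_prec:
  assumes pa: "is_pf a" and pc: "is_pf c" and ne: "a \<noteq> [] \<or> c \<noteq> []"
  shows "Poly_Mapping.lookup (ext_prec q a c) v =
   (if length v = length a + length c \<and> is_pf v \<and> park (take (length a) v) = a \<and> park (drop (length a) v) = c \<and>
       max0 (take (length a) v) > max0 (drop (length a) v) then q ^ cap (take (length a) v) (drop (length a) v) else 0)"
proof (cases "c = []")
  case True
  then have an: "a \<noteq> []" using ne by simp
  have "v = a \<Longrightarrow> 1 \<le> max0 v" using max0_ge1[of v v] pa an by simp
  moreover have "(length v = length a \<and> is_pf v \<and> park v = a) \<longleftrightarrow> v = a" using pf_eq_iff[OF pa, of v] by auto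
  ultimately show ?thesis using True an by (auto simp: ext_prec_def lookup_single when_def max0_def)
next
  case cn: False
  show ?thesis
  proof (cases "a = []")
    case True then show ?thesis using cn by (auto simp: ext_prec_def max0_def)
  next
    case False then show ?thesis using cn by (simp add: ext_prec_def prec_b_park_sum lookup_park_sum_nonempty)
  qed
qed

lemma lookup_ext_dot:
  assumes pa: "is_pf a" and pc: "is_pf c" and ne: "a \<noteq> [] \<or> c \<noteq> []"
  shows "Poly_Mapping.lookup (ext_dot q a c) v =
   (if length v = length a + length c \<and> is_pf v \<and> park (take (length a) v) = a \<and> park (drop (length a) v) = c \<and>
       max0 (take (length a) v) = max0 (drop (length a) v) then q ^ (cap (take (length a) v) (drop (length a) v) - 1) else 0)"
proof (cases "a = [] \<or> c = []")
  case True
  have "\<not> (length v = length a + length c \<and> is_pf v \<and> park (take (length a) v) = a \<and> park (drop (length a) v) = c \<and>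
       max0 (take (length a) v) = max0 (drop (length a) v))"
  proof
    assume h: "length v = length a + length c \<and> is_pf v \<and> park (take (length a) v) = a \<and> park (drop (length a) v) = c \<and>
       max0 (take (length a) v) = max0 (drop (length a) v)"
    show False
    proof (cases "a = []")
      case True
      then have "c \<noteq> []" "v \<noteq> []" using ne h by auto
      then have "1 \<le> max0 v" using max0_ge1[of v v] h by simp
      then show False using h True by (simp add: max0_def)
    next
      case False
      then have "c = []" "v \<noteq> []" using ne h \<open>a = [] \<or> c = []\<close> by auto
      then have "1 \<le> max0 v" using max0_ge1[of v v] h by simp
      moreover have td: "take (length a) v = v" "drop (length a) v = []" using h \<open>c = []\<close> by simp_all
      moreover have "max0 (take (length a) v) = max0 (drop (length a) v)" using h by blast
      ultimately show False unfolding td by (simp add: max0_def)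
    qed
  qed
  then show ?thesis using True by (auto simp: ext_dot_def)
next
  case False then show ?thesis by (simp add: ext_dot_def dot_b_park_sum lookup_park_sum_nonempty)
qed

lemma cut_of_pair:
  assumes w: "is_pf (h @ k)" and ph: "park h = f" and pk: "park k = g"
    and u: "lowpart j (h @ k) = u" and v: "highpart j (h @ k) = v" and lu: "length u = j"
  shows "length (lowpart j h) \<in> cuts f" "length (lowpart j k) \<in> cuts g"
    "lowpart (length (lowpart j h)) f = park (lowpart j h)" "highpart (length (lowpart j h)) f = park (highpart j h)"
    "lowpart (length (lowpart j k)) g = park (lowpart j k)" "highpart (length (lowpart j k)) g = park (highpart j k)"
    "u = lowpart j h @ lowpart j k" "v = highpart j h @ highpart j k" "low_bounded j h" "low_bounded j k" "is_pf u" "is_pf v"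
proof -
  have lw: "length (lowpart j (h @ k)) = j" using u lu by simp
  show Ch: "low_bounded j h" by (rule low_bounded_sub[OF w lw mset_app_sub(1)])
  show Ck: "low_bounded j k" by (rule low_bounded_sub[OF w lw mset_app_sub(2)])
  show "u = lowpart j h @ lowpart j k" using u by (simp add: lowpart_append)
  show "v = highpart j h @ highpart j k" using v by (simp add: highpart_append)
  show pu: "is_pf u" using is_pf_cut_parts[OF w lw] u by simp
  show "is_pf v" using is_pf_cut_parts[OF w lw] v by simp
  show "lowpart (length (lowpart j h)) f = park (lowpart j h)" "highpart (length (lowpart j h)) f = park (highpart j h)"
    using park_cut[OF Ch] ph by simp_all
  show "lowpart (length (lowpart j k)) g = park (lowpart j k)" "highpart (length (lowpart j k)) g = park (highpart j k)"
    using park_cut[OF Ck] pk by simp_all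
  show "length (lowpart j h) \<in> cuts f"
    unfolding cuts_def using park_cut[OF Ch] ph is_pf_park length_lowpart_le[of j h] park_length[of h] by auto
  show "length (lowpart j k) \<in> cuts g"
    unfolding cuts_def using park_cut[OF Ck] pk is_pf_park length_lowpart_le[of j k] park_length[of k] by auto
qed

lemma merge_by_cut:
  assumes C: "low_bounded j h"
  shows "merge_by (length (lowpart j h)) (park h) (lowpart j h) (map (\<lambda>x. x + j) (highpart j h)) = h"
proof -
  have "merge_by (length (lowpart j h)) (park h) (filter (\<lambda>x. x \<le> j) h) (filter (\<lambda>x. j < x) h) = h"
  proof (rule merge_by_filter_eq)
    show "length h = length (park h)" by simp
    show "\<forall>p<length (park h). h ! p \<le> j \<longleftrightarrow> park h ! p \<le> length (lowpart j h)"
      using parkval_low_iff[OF C] by (simp add: park_eq_map_parkval)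
  qed
  then show ?thesis unfolding filter_greater_highpart lowpart_def .
qed

lemma merge_by_parts:
  assumes A: "\<forall>a\<in>set A. a \<le> j" and B: "\<forall>b\<in>set B. 1 \<le> b"
    and pA: "park A = lowpart i f" and pB: "park B = highpart i f"
  shows "lowpart j (merge_by i f A (map (\<lambda>x. x + j) B)) = A"
    and "highpart j (merge_by i f A (map (\<lambda>x. x + j) B)) = B"
proof -
  have "length A = length (filter (\<lambda>v. v \<le> i) f)" "length (map (\<lambda>x. x + j) B) = length (filter (\<lambda>v. i < v) f)"
    using arg_cong[OF pA, of length] arg_cong[OF pB, of length] unfolding lowpart_def highpart_def by simp_all
  then have "filter (\<lambda>v. v \<le> j) (merge_by i f A (map (\<lambda>x. x + j) B)) = A \<and>
      filter (\<lambda>v. j < v) (merge_by i f A (map (\<lambda>x. x + j) B)) = map (\<lambda>x. x + j) B"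
    using A B by (intro merge_by_filter) auto
  then show "lowpart j (merge_by i f A (map (\<lambda>x. x + j) B)) = A"
    and "highpart j (merge_by i f A (map (\<lambda>x. x + j) B)) = B"
    unfolding lowpart_def highpart_def by (simp_all add: o_def)
qed

lemma park_merge_cut:
  assumes iJ: "i \<in> cuts f" and A: "\<forall>a\<in>set A. a \<le> j" and B: "\<forall>b\<in>set B. 1 \<le> b"
    and pA: "park A = lowpart i f" and pB: "park B = highpart i f"
    and C: "low_bounded j (merge_by i f A (map (\<lambda>x. x + j) B))"
  shows "park (merge_by i f A (map (\<lambda>x. x + j) B)) = f"
proof (rule park_merge_by[OF length_lowpart_cut[OF iJ] A _ _ _ C pA])
  show "\<forall>b\<in>set (map (\<lambda>x. x + j) B). j < b" using B by auto
  show "length A = length (lowpart i f)" using arg_cong[OF pA, of length] by simp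
  show "length (map (\<lambda>x. x + j) B) = length (filter (\<lambda>v. i < v) f)"
    using arg_cong[OF pB, of length] unfolding highpart_def by simp
  show "park (map (\<lambda>v. v - j) (map (\<lambda>x. x + j) B)) = highpart i f" using pB by (simp add: o_def)
qed

section \<open>Compatibility of Delta with the three products\<close>

text \<open>The common shape of the three products: R compares the maxima, e gives the power of q
  from the number of common values, X is the extended product on basis elements.  For fixed
  nonempty parking functions f, g and a basis pair (u, v) with |u| = j we compare the
  coefficients of u \<otimes> v in Delta(f o g) and in the sum of the terms of Delta f o Delta g.\<close>
locale coproduct_compat =
  fixes q :: "'a::comm_ring_1" and R :: "nat \<Rightarrow> nat \<Rightarrow> bool" and e :: "nat \<Rightarrow> 'a"
    and X :: "nat list \<Rightarrow> nat list \<Rightarrow> (nat list \<Rightarrow>\<^sub>0 'a)"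
    and f g u v :: "nat list" and j :: nat
  assumes len_u: "length u = j"
    and R_order: "\<And>a b a' b'. (a < b \<longleftrightarrow> a' < b') \<Longrightarrow> (a = b \<longleftrightarrow> a' = b') \<Longrightarrow> R a b = R a' b'"
    and e_shift: "\<And>c1 c2 a b. R a b \<Longrightarrow> (a = b \<Longrightarrow> 1 \<le> c2) \<Longrightarrow> e (c1 + c2) = q ^ c1 * e c2"
    and X_coeff: "\<And>a c w. is_pf a \<Longrightarrow> is_pf c \<Longrightarrow> a \<noteq> [] \<or> c \<noteq> [] \<Longrightarrow>
       Poly_Mapping.lookup (X a c) w = (if length w = length a + length c \<and> is_pf w \<and> park (take (length a) w) = a \<and>
          park (drop (length a) w) = c \<and> R (max0 (take (length a) w)) (max0 (drop (length a) w))
        then e (cap (take (length a) w) (drop (length a) w)) else 0)"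
    and f_pf: "is_pf f" "f \<noteq> []" and g_pf: "is_pf g" "g \<noteq> []"
begin

text \<open>The words hk of f o g whose cut at j is (u, v); the map recording the lengths of the two
  low parts; the coefficient of u \<otimes> v in the term of Delta f o Delta g indexed by a pair
  of cut points.\<close>
definition fibre where "fibre = {(h, k) \<in> park_pairs R f g. lowpart j (h @ k) = u \<and> highpart j (h @ k) = v}"
definition cut_lens :: "nat list \<times> nat list \<Rightarrow> nat \<times> nat" where "cut_lens p = (length (lowpart j (fst p)), length (lowpart j (snd p)))"
definition ccoeff where "ccoeff p = Poly_Mapping.lookup (compat_b q X (lowpart (fst p) f, highpart (fst p) f) (lowpart (snd p) g, highpart (snd p) g)) (u, v)"

lemma fibreD:
  assumes "(h, k) \<in> fibre"
  shows "is_pf (h @ k)" "park h = f" "park k = g" "R (Max (set h)) (Max (set k))"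
    "lowpart j (h @ k) = u" "highpart j (h @ k) = v" "h \<noteq> []" "k \<noteq> []" "length h = length f" "length k = length g"
  using assms f_pf g_pf unfolding fibre_def park_pairs_def by (auto dest: park_len_eq)

lemma vals_ge1: assumes "(h, k) \<in> fibre" shows "\<forall>y\<in>set h. 1 \<le> y" "\<forall>y\<in>set k. 1 \<le> y"
  using pf_ge1[OF fibreD(1)[OF assms]] by auto

lemma relation_highpart:
  assumes hk: "(h, k) \<in> fibre" and ne: "highpart j h \<noteq> [] \<or> highpart j k \<noteq> []"
  shows "R (max0 (highpart j h)) (max0 (highpart j k))"
proof -
  have "R (max0 (highpart j h)) (max0 (highpart j k)) = R (Max (set h)) (Max (set k))"
    using compare_max_highpart[OF fibreD(7) vals_ge1(1) fibreD(8) vals_ge1(2), OF hk hk hk hk ne]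
    by (intro R_order) auto
  then show ?thesis using fibreD(4)[OF hk] by simp
qed

text \<open>The coefficient of a pair of cut points, in the degenerate case (both high parts empty,
  so the unit conventions apply) and in the general case.\<close>
lemma ccoeff_degenerate:
  assumes "highpart i f = []" "highpart l g = []"
  shows "ccoeff (i, l) = Poly_Mapping.lookup (X (lowpart i f) (lowpart l g)) u * Poly_Mapping.lookup (Poly_Mapping.single [] 1) v"
  unfolding ccoeff_def compat_b_def using assms by (simp add: lookup_tens)

lemma ccoeff_general:
  assumes "highpart i f \<noteq> [] \<or> highpart l g \<noteq> []"
  shows "ccoeff (i, l) = Poly_Mapping.lookup (ext_star q (lowpart i f) (lowpart l g)) u *
    Poly_Mapping.lookup (X (highpart i f) (highpart l g)) v"
proof -
  have nn: "\<not> (highpart i f = [] \<and> highpart l g = [])" using assms by blast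
  show ?thesis unfolding ccoeff_def compat_b_def fst_conv snd_conv if_not_P[OF nn] by (rule lookup_tens)
qed

lemma cut_lens_in_cuts: "(h, k) \<in> fibre \<Longrightarrow> cut_lens (h, k) \<in> cuts f \<times> cuts g"
  unfolding cut_lens_def using cut_of_pair[OF fibreD(1-3,5,6) len_u] by simp

text \<open>Each element (h, k) of the fibre contributes e (cap h k) on the left and the same amount
  through the pair of cut points cut_lens (h, k) on the right.\<close>
lemma ccoeff_cut_lens:
  assumes hk: "(h, k) \<in> fibre"
  shows "ccoeff (cut_lens (h, k)) = e (cap h k)"
proof -
  note D = fibreD[OF hk]
  note F = cut_of_pair[OF D(1) D(2) D(3) D(5) D(6) len_u]
  let ?i = "length (lowpart j h)" and ?l = "length (lowpart j k)"
  have li: "length (lowpart ?i f) = ?i" "length (lowpart ?l g) = ?l" using F(3,5) by simp_all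
  show ?thesis
  proof (cases "highpart j h = [] \<and> highpart j k = []")
    case True
    have fh: "lowpart j h = h" "lowpart j k = k" using True highpart_Nil_lowpart by auto
    have ff: "lowpart ?i f = f" "lowpart ?l g = g" "highpart ?i f = []" "highpart ?l g = []"
      using F(3-6) True fh D(2,3) by simp_all
    have uv: "u = h @ k" "v = []" using F(7,8) True fh by simp_all
    have "Poly_Mapping.lookup (X f g) u = e (cap h k)"
      using X_coeff[OF f_pf(1) g_pf(1)] f_pf(2) g_pf(2) D uv F(11) by (simp add: max0_def)
    then show ?thesis using ccoeff_degenerate[OF ff(3,4)] ff uv unfolding cut_lens_def by simp
  next
    case False
    let ?hh = "highpart j h" and ?hk = "highpart j k"
    have ne2: "highpart ?i f \<noteq> [] \<or> highpart ?l g \<noteq> []" using False F(4,6) by simp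
    have pf1: "is_pf (lowpart ?i f)" "is_pf (lowpart ?l g)" "is_pf (highpart ?i f)" "is_pf (highpart ?l g)"
      using F(3-6) is_pf_park by simp_all
    have low: "Poly_Mapping.lookup (ext_star q (lowpart ?i f) (lowpart ?l g)) u = q ^ cap (lowpart j h) (lowpart j k)"
      using lookup_ext_star[OF pf1(1,2), of q u] li F(3,5,7,11) by simp
    have R2: "R (max0 ?hh) (max0 ?hk)" using relation_highpart[OF hk] False by simp
    have high: "Poly_Mapping.lookup (X (highpart ?i f) (highpart ?l g)) v = e (cap ?hh ?hk)"
      using X_coeff[OF pf1(3,4) ne2, of v] F(4,6,8,12) R2 by simp
    have "1 \<le> cap ?hh ?hk" if eq: "max0 ?hh = max0 ?hk"
    proof -
      have "?hh \<noteq> [] \<Longrightarrow> 1 \<le> max0 ?hh" "?hk \<noteq> [] \<Longrightarrow> 1 \<le> max0 ?hk"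
        using max0_highpart(3)[OF D(7) vals_ge1(1)[OF hk]] max0_highpart(3)[OF D(8) vals_ge1(2)[OF hk]] by auto
      then have ne: "?hh \<noteq> []" "?hk \<noteq> []" using False eq by (auto simp: max0_def)
      then show ?thesis using cap_pos_if_Max_eq[OF ne] eq by (simp add: max0_def)
    qed
    then have "q ^ cap (lowpart j h) (lowpart j k) * e (cap ?hh ?hk) = e (cap h k)"
      using e_shift[OF R2] cap_split[of h k j] by simp
    then show ?thesis using ccoeff_general[OF ne2] low high unfolding cut_lens_def by simp
  qed
qed

text \<open>An element of the fibre is determined by the lengths of its low parts.\<close>
lemma fibre_merge_by:
  assumes hk: "(h, k) \<in> fibre"
  shows "h = merge_by (length (lowpart j h)) f (take (length (lowpart j h)) u) (map (\<lambda>x. x + j) (take (length f - length (lowpart j h)) v))"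
    "k = merge_by (length (lowpart j k)) g (drop (length (lowpart j h)) u) (map (\<lambda>x. x + j) (drop (length f - length (lowpart j h)) v))"
proof -
  note D = fibreD[OF hk]
  note F = cut_of_pair[OF D(1) D(2) D(3) D(5) D(6) len_u]
  let ?i = "length (lowpart j h)"
  have "length (highpart j h) = length f - ?i" using length_highpart[of j h] D(9) by simp
  then have parts: "take ?i u = lowpart j h" "drop ?i u = lowpart j k"
    "take (length f - ?i) v = highpart j h" "drop (length f - ?i) v = highpart j k"
    using F(7,8) by simp_all
  show "h = merge_by ?i f (take ?i u) (map (\<lambda>x. x + j) (take (length f - ?i) v))"
    using merge_by_cut[OF F(9)] D(2) unfolding parts by simp
  show "k = merge_by (length (lowpart j k)) g (drop ?i u) (map (\<lambda>x. x + j) (drop (length f - ?i) v))"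
    using merge_by_cut[OF F(10)] D(3) unfolding parts by simp
qed

lemma cut_lens_inj: "inj_on cut_lens fibre"
proof (rule inj_onI)
  fix p p' assume p: "p \<in> fibre" "p' \<in> fibre" "cut_lens p = cut_lens p'"
  obtain h k where hk: "p = (h, k)" by (cases p)
  obtain h' k' where hk': "p' = (h', k')" by (cases p')
  have e: "length (lowpart j h) = length (lowpart j h')" "length (lowpart j k) = length (lowpart j k')"
    using p(3) unfolding hk hk' cut_lens_def by simp_all
  have "h = h'" using fibre_merge_by(1)[OF p(1)[unfolded hk]] fibre_merge_by(1)[OF p(2)[unfolded hk']] e by simp
  moreover have "k = k'" using fibre_merge_by(2)[OF p(1)[unfolded hk]] fibre_merge_by(2)[OF p(2)[unfolded hk']] e by simp
  ultimately show "p = p'" using hk hk' by simp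
qed

text \<open>Every pair of cut points with a nonzero coefficient comes from the fibre; in the degenerate
  case the preimage is the split of u itself.\<close>
lemma cut_lens_surj_degenerate:
  assumes iJ: "i \<in> cuts f" and lJ: "l \<in> cuts g"
    and hi: "highpart i f = []" "highpart l g = []" and nz: "ccoeff (i, l) \<noteq> 0"
  shows "(i, l) \<in> cut_lens ` fibre"
proof -
  have ff: "lowpart i f = f" "lowpart l g = g" using hi highpart_Nil_lowpart by auto
  have ifl: "i = length f" "l = length g" using length_lowpart_cut[OF iJ] length_lowpart_cut[OF lJ] ff by auto
  have nz': "Poly_Mapping.lookup (X f g) u \<noteq> 0" "v = []"
    using nz ccoeff_degenerate[OF hi] ff by (auto simp: lookup_single when_def split: if_splits)
  let ?h = "take (length f) u" and ?k = "drop (length f) u"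
  have c: "length u = length f + length g" "is_pf u" "park ?h = f" "park ?k = g" "R (max0 ?h) (max0 ?k)"
    using nz'(1) X_coeff[OF f_pf(1) g_pf(1), of u] f_pf(2) by (auto split: if_splits)
  have ne: "?h \<noteq> []" "?k \<noteq> []" using c(1) f_pf(2) g_pf(2) by auto
  have small: "\<forall>a\<in>set u. a \<le> j" using pf_vals[OF c(2)] len_u by auto
  then have "highpart j u = []" by (simp add: highpart_Nil_iff)
  then have "(?h, ?k) \<in> fibre"
    unfolding fibre_def park_pairs_def using c ne highpart_Nil_lowpart nz'(2) by (simp add: max0_def)
  moreover have "lowpart j ?h = ?h" "lowpart j ?k = ?k"
    using small by (auto intro!: highpart_Nil_lowpart simp: highpart_Nil_iff dest!: in_set_takeD in_set_dropD)
  then have "cut_lens (?h, ?k) = (i, l)" unfolding cut_lens_def using ifl c(1) by simp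
  ultimately show ?thesis by force
qed

lemma ccoeff_general_nonzero:
  assumes iJ: "i \<in> cuts f" and lJ: "l \<in> cuts g" and ne: "highpart i f \<noteq> [] \<or> highpart l g \<noteq> []"
    and nz: "ccoeff (i, l) \<noteq> 0"
  shows "length u = i + l" "is_pf u" "park (take i u) = lowpart i f" "park (drop i u) = lowpart l g"
    and "is_pf v" "park (take (length f - i) v) = highpart i f" "park (drop (length f - i) v) = highpart l g"
    and "R (max0 (take (length f - i) v)) (max0 (drop (length f - i) v))"
proof -
  have li: "length (lowpart i f) = i" "length (lowpart l g) = l"
    using iJ lJ by (simp_all add: length_lowpart_cut)
  have pfs: "is_pf (lowpart i f)" "is_pf (highpart i f)" "is_pf (lowpart l g)" "is_pf (highpart l g)"
    using iJ lJ unfolding cuts_def by auto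
  have nz': "Poly_Mapping.lookup (ext_star q (lowpart i f) (lowpart l g)) u \<noteq> 0"
    "Poly_Mapping.lookup (X (highpart i f) (highpart l g)) v \<noteq> 0"
    using nz ccoeff_general[OF ne] by auto
  show "length u = i + l" "is_pf u" "park (take i u) = lowpart i f" "park (drop i u) = lowpart l g"
    using nz'(1) lookup_ext_star[OF pfs(1,3), of q u] li by (auto split: if_splits)
  show "is_pf v" "park (take (length f - i) v) = highpart i f" "park (drop (length f - i) v) = highpart l g"
      "R (max0 (take (length f - i) v)) (max0 (drop (length f - i) v))"
    using nz'(2) X_coeff[OF pfs(2,4) ne, of v] length_highpart_cut[OF iJ] by (auto split: if_splits)
qed

text \<open>In the general case the preimage is obtained by merging the parts of u and v along the
  patterns of f and g.\<close>
lemma cut_lens_surj_general: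
  assumes iJ: "i \<in> cuts f" and lJ: "l \<in> cuts g" and ne: "highpart i f \<noteq> [] \<or> highpart l g \<noteq> []"
    and nz: "ccoeff (i, l) \<noteq> 0"
  shows "(i, l) \<in> cut_lens ` fibre"
proof -
  let ?n = "length f - i"
  note es = ccoeff_general_nonzero(1-4)[OF iJ lJ ne nz]
  note xs = ccoeff_general_nonzero(5-8)[OF iJ lJ ne nz]
  define h where "h = merge_by i f (take i u) (map (\<lambda>x. x + j) (take ?n v))"
  define k where "k = merge_by l g (drop i u) (map (\<lambda>x. x + j) (drop ?n v))"
  have small: "\<forall>a\<in>set (take i u). a \<le> j" "\<forall>a\<in>set (drop i u). a \<le> j"
    using pf_vals[OF es(2)] len_u by (auto dest: in_set_takeD in_set_dropD)
  have pos: "\<forall>b\<in>set (take ?n v). 1 \<le> b" "\<forall>b\<in>set (drop ?n v). 1 \<le> b"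
    using pf_vals[OF xs(1)] by (auto dest: in_set_takeD in_set_dropD)
  note parts_h = merge_by_parts[OF small(1) pos(1) es(3) xs(2), folded h_def]
  note parts_k = merge_by_parts[OF small(2) pos(2) es(4) xs(3), folded k_def]
  have Fw: "lowpart j (h @ k) = u" "highpart j (h @ k) = v"
    unfolding lowpart_append highpart_append parts_h parts_k by simp_all
  have lw: "length (lowpart j (h @ k)) = j" using Fw len_u by simp
  have pw: "is_pf (h @ k)" by (rule is_pf_of_cut_parts[OF _ _ lw]) (simp_all add: Fw es(2) xs(1))
  have ph: "park h = f" unfolding h_def
    by (rule park_merge_cut[OF iJ small(1) pos(1) es(3) xs(2)])
       (rule low_bounded_sub[OF pw lw mset_app_sub(1), unfolded h_def])
  have pk: "park k = g" unfolding k_def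
    by (rule park_merge_cut[OF lJ small(2) pos(2) es(4) xs(3)])
       (rule low_bounded_sub[OF pw lw mset_app_sub(2), unfolded k_def])
  have hne: "h \<noteq> []" "k \<noteq> []" using ph pk f_pf(2) g_pf(2) by auto
  have neF: "highpart j h \<noteq> [] \<or> highpart j k \<noteq> []" using ne parts_h parts_k xs(2,3) by auto
  have g1: "\<forall>y\<in>set h. 1 \<le> y" "\<forall>y\<in>set k. 1 \<le> y" using pf_ge1[OF pw] by auto
  have "R (max0 (highpart j h)) (max0 (highpart j k)) = R (Max (set h)) (Max (set k))"
    using compare_max_highpart[OF hne(1) g1(1) hne(2) g1(2) neF] by (intro R_order) auto
  then have "R (Max (set h)) (Max (set k))" using xs(4) parts_h parts_k by simp
  then have "(h, k) \<in> fibre" unfolding fibre_def park_pairs_def using pw ph pk Fw by simp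
  moreover have "cut_lens (h, k) = (i, l)" unfolding cut_lens_def using parts_h parts_k es(1) by simp
  ultimately show ?thesis by force
qed

lemma cut_lens_surj:
  assumes "p \<in> cuts f \<times> cuts g" and "ccoeff p \<noteq> 0"
  shows "p \<in> cut_lens ` fibre"
  using assms cut_lens_surj_degenerate cut_lens_surj_general by (cases p) blast

text \<open>The two sides of the compatibility, evaluated at u \<otimes> v, both equal the sum of
  e (cap h k) over the fibre.\<close>
lemma lhs_fibre_sum:
  "(\<Sum>(h, k)\<in>park_pairs R f g. e (cap h k) * Poly_Mapping.lookup (cop_b (h @ k)) (u, v)) =
   (\<Sum>(h, k)\<in>fibre. e (cap h k))"
proof -
  have "(\<Sum>(h, k)\<in>park_pairs R f g. e (cap h k) * Poly_Mapping.lookup (cop_b (h @ k)) (u, v)) =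
        (\<Sum>p\<in>park_pairs R f g. if p \<in> fibre then e (cap (fst p) (snd p)) else 0)"
  proof (rule sum.cong[OF refl])
    fix p assume pP: "p \<in> park_pairs R f g"
    obtain h k where p: "p = (h, k)" by (cases p)
    have pw: "is_pf (h @ k)" using pP p unfolding park_pairs_def by simp
    have "p \<in> fibre \<longleftrightarrow> lowpart j (h @ k) = u \<and> highpart j (h @ k) = v"
      using pP unfolding fibre_def p by blast
    also have "\<dots> \<longleftrightarrow> length u \<in> cuts (h @ k) \<and> lowpart (length u) (h @ k) = u \<and> highpart (length u) (h @ k) = v"
      unfolding len_u cuts_pf_iff[OF pw] by (metis len_u)
    finally have "length u \<in> cuts (h @ k) \<and> lowpart (length u) (h @ k) = u \<and> highpart (length u) (h @ k) = v \<longleftrightarrow>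
        p \<in> fibre" by blast
    then show "(case p of (h, k) \<Rightarrow> e (cap h k) * Poly_Mapping.lookup (cop_b (h @ k)) (u, v)) =
        (if p \<in> fibre then e (cap (fst p) (snd p)) else 0)"
      unfolding p by (simp add: lookup_cop_b)
  qed
  also have "\<dots> = (\<Sum>p\<in>{p \<in> park_pairs R f g. p \<in> fibre}. e (cap (fst p) (snd p)))"
    by (rule sum.inter_filter[symmetric]) (rule park_pairs_finite)
  also have "{p \<in> park_pairs R f g. p \<in> fibre} = fibre" unfolding fibre_def by auto
  finally show ?thesis by (simp add: case_prod_beta)
qed

lemma rhs_fibre_sum:
  "(\<Sum>i\<in>cuts f. \<Sum>l\<in>cuts g. Poly_Mapping.lookup (compat_b q X (lowpart i f, highpart i f) (lowpart l g, highpart l g)) (u, v)) =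
   (\<Sum>(h, k)\<in>fibre. e (cap h k))"
proof -
  have "(\<Sum>i\<in>cuts f. \<Sum>l\<in>cuts g. Poly_Mapping.lookup (compat_b q X (lowpart i f, highpart i f) (lowpart l g, highpart l g)) (u, v))
      = (\<Sum>p\<in>cuts f \<times> cuts g. ccoeff p)"
    unfolding ccoeff_def by (simp add: sum.cartesian_product case_prod_beta)
  also have "\<dots> = (\<Sum>p\<in>cut_lens ` fibre. ccoeff p)"
  proof (rule sum.mono_neutral_right)
    show "finite (cuts f \<times> cuts g)" by (simp add: finite_cuts)
    show "cut_lens ` fibre \<subseteq> cuts f \<times> cuts g"
      using cut_lens_in_cuts by (intro image_subsetI) (metis prod.collapse)
    show "\<forall>p\<in>cuts f \<times> cuts g - cut_lens ` fibre. ccoeff p = 0" using cut_lens_surj by blast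
  qed
  also have "\<dots> = (\<Sum>p\<in>fibre. ccoeff (cut_lens p))" by (simp add: sum.reindex[OF cut_lens_inj])
  also have "\<dots> = (\<Sum>(h, k)\<in>fibre. e (cap h k))" by (rule sum.cong[OF refl]) (auto simp: ccoeff_cut_lens)
  finally show ?thesis .
qed

lemma compat_basis:
  "(\<Sum>(h, k)\<in>park_pairs R f g. e (cap h k) * Poly_Mapping.lookup (cop_b (h @ k)) (u, v)) =
   (\<Sum>i\<in>cuts f. \<Sum>l\<in>cuts g. Poly_Mapping.lookup (compat_b q X (lowpart i f, highpart i f) (lowpart l g, highpart l g)) (u, v))"
  unfolding lhs_fibre_sum rhs_fibre_sum ..

end

lemma compat_basis_succ:
  assumes "is_pf f" "f \<noteq> []" "is_pf g" "g \<noteq> []"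
  shows "(\<Sum>(h, k)\<in>park_pairs (\<lambda>a b. a < b) f g. q ^ cap h k * Poly_Mapping.lookup (cop_b (h @ k)) (u, v)) =
   (\<Sum>i\<in>cuts f. \<Sum>l\<in>cuts g. Poly_Mapping.lookup (compat_b q (ext_succ q) (lowpart i f, highpart i f) (lowpart l g, highpart l g)) (u, v))"
proof -
  have power_split: "\<And>c1 c2. q ^ (c1 + c2) = q ^ c1 * q ^ c2" by (simp add: power_add)
  interpret coproduct_compat q "\<lambda>a b. a < b" "\<lambda>c. q ^ c" "ext_succ q" f g u v "length u"
    by (unfold_locales) (auto simp: power_split lookup_ext_succ assms)
  show ?thesis using compat_basis by simp
qed

lemma compat_basis_prec:
  assumes "is_pf f" "f \<noteq> []" "is_pf g" "g \<noteq> []"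
  shows "(\<Sum>(h, k)\<in>park_pairs (\<lambda>a b. a > b) f g. q ^ cap h k * Poly_Mapping.lookup (cop_b (h @ k)) (u, v)) =
   (\<Sum>i\<in>cuts f. \<Sum>l\<in>cuts g. Poly_Mapping.lookup (compat_b q (ext_prec q) (lowpart i f, highpart i f) (lowpart l g, highpart l g)) (u, v))"
proof -
  have power_split: "\<And>c1 c2. q ^ (c1 + c2) = q ^ c1 * q ^ c2" by (simp add: power_add)
  interpret coproduct_compat q "\<lambda>a b. a > b" "\<lambda>c. q ^ c" "ext_prec q" f g u v "length u"
    by (unfold_locales) (auto simp: power_split lookup_ext_prec assms)
  show ?thesis using compat_basis by simp
qed

lemma compat_basis_dot:
  assumes "is_pf f" "f \<noteq> []" "is_pf g" "g \<noteq> []"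
  shows "(\<Sum>(h, k)\<in>park_pairs (\<lambda>a b. a = b) f g. q ^ (cap h k - 1) * Poly_Mapping.lookup (cop_b (h @ k)) (u, v)) =
   (\<Sum>i\<in>cuts f. \<Sum>l\<in>cuts g. Poly_Mapping.lookup (compat_b q (ext_dot q) (lowpart i f, highpart i f) (lowpart l g, highpart l g)) (u, v))"
proof -
  have power_split: "\<And>c1 c2. Suc 0 \<le> c2 \<Longrightarrow> q ^ (c1 + c2 - Suc 0) = q ^ c1 * q ^ (c2 - Suc 0)"
  proof -
    fix c1 c2 :: nat assume "Suc 0 \<le> c2"
    then have "c1 + c2 - Suc 0 = c1 + (c2 - Suc 0)" by simp
    then show "q ^ (c1 + c2 - Suc 0) = q ^ c1 * q ^ (c2 - Suc 0)" by (simp add: power_add)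
  qed
  interpret coproduct_compat q "\<lambda>a b. a = b" "\<lambda>c. q ^ (c - 1)" "ext_dot q" f g u v "length u"
    by (unfold_locales) (auto simp: power_split lookup_ext_dot assms)
  show ?thesis using compat_basis by simp
qed

lemma PQS_keys: "x \<in> PQS \<Longrightarrow> f \<in> Poly_Mapping.keys x \<Longrightarrow> is_pf f \<and> f \<noteq> []"
  unfolding PQS_def by auto

lemma Cop_park_sum:
  assumes BE: "\<And>f g u v. is_pf f \<Longrightarrow> f \<noteq> [] \<Longrightarrow> is_pf g \<Longrightarrow> g \<noteq> [] \<Longrightarrow>
      (\<Sum>(h, k)\<in>park_pairs R f g. e (cap h k) * Poly_Mapping.lookup (cop_b (h @ k)) (u, v)) =
      (\<Sum>i\<in>cuts f. \<Sum>l\<in>cuts g. Poly_Mapping.lookup (compat_b q X (lowpart i f, highpart i f) (lowpart l g, highpart l g)) (u, v))"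
    and x: "x \<in> PQS" and y: "y \<in> PQS"
  shows "Cop (bilin (park_sum R (\<lambda>h k. e (cap h k))) x y) = bilinT (compat_b q X) (Cop x) (Cop y)"
proof (rule poly_mapping_eqI)
  fix p0 :: "nat list \<times> nat list"
  obtain u v where p0: "p0 = (u, v)" by (cases p0)
  have "Poly_Mapping.lookup (Cop (bilin (park_sum R (\<lambda>h k. e (cap h k))) x y)) (u, v) =
     lin (\<lambda>f. lin (\<lambda>g. \<Sum>(h, k)\<in>park_pairs R f g. e (cap h k) * Poly_Mapping.lookup (cop_b (h @ k)) (u, v)) y) x"
    unfolding lookup_Cop lin_bilin lin_park_sum ..
  also have "\<dots> = lin (\<lambda>f. lin (\<lambda>g. \<Sum>i\<in>cuts f. \<Sum>l\<in>cuts g.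
       Poly_Mapping.lookup (compat_b q X (lowpart i f, highpart i f) (lowpart l g, highpart l g)) (u, v)) y) x"
    by (intro lin_cong BE) (use PQS_keys x y in auto)
  also have "\<dots> = Poly_Mapping.lookup (bilinT (compat_b q X) (Cop x) (Cop y)) (u, v)"
    unfolding lookup_bilinT lin_Cop lin_cop_b
    by (intro lin_cong) (simp add: lin_sumG finite_cuts)
  finally show "Poly_Mapping.lookup (Cop (bilin (park_sum R (\<lambda>h k. e (cap h k))) x y)) p0 =
      Poly_Mapping.lookup (bilinT (compat_b q X) (Cop x) (Cop y)) p0" using p0 by simp
qed

lemma compat_succ: "x \<in> PQS \<Longrightarrow> y \<in> PQS \<Longrightarrow> Cop (Succ q x y) = bilinT (compat_b q (ext_succ q)) (Cop x) (Cop y)"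
  unfolding Succ_def succ_b_park_sum using Cop_park_sum[where e="\<lambda>c. q ^ c", OF compat_basis_succ] by simp

lemma compat_prec: "x \<in> PQS \<Longrightarrow> y \<in> PQS \<Longrightarrow> Cop (Prec q x y) = bilinT (compat_b q (ext_prec q)) (Cop x) (Cop y)"
  unfolding Prec_def prec_b_park_sum using Cop_park_sum[where e="\<lambda>c. q ^ c", OF compat_basis_prec] by simp

lemma compat_dot: "x \<in> PQS \<Longrightarrow> y \<in> PQS \<Longrightarrow> Cop (Dot q x y) = bilinT (compat_b q (ext_dot q)) (Cop x) (Cop y)"
  unfolding Dot_def dot_b_park_sum using Cop_park_sum[where e="\<lambda>c. q ^ (c - 1)", OF compat_basis_dot] by simp

lemma lin_delta: "lin (\<lambda>p. if p = k then 1 else 0) t = Poly_Mapping.lookup t k"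
  unfolding lin_def by (simp add: sum.delta in_keys_iff if_distrib[where f="\<lambda>x. _ * x"] cong: if_cong)

lemma counit_single: "counit (Poly_Mapping.single a (1::'a::comm_ring_1)) = (if a = [] then 1 else 0)"
  unfolding counit_def by (simp add: lookup_single when_def)

lemma lookup_counit_id: "Poly_Mapping.lookup (counit_id t) w = Poly_Mapping.lookup t ([], w)"
proof -
  have "Poly_Mapping.lookup (counit_id t) w = lin (\<lambda>p. if p = ([], w) then 1 else 0) t"
    unfolding counit_id_def lin_def lookup_sum
    by (intro sum.cong refl) (auto simp: counit_single lookup_single when_def)
  then show ?thesis by (simp add: lin_delta)
qed

lemma lookup_id_counit: "Poly_Mapping.lookup (id_counit t) w = Poly_Mapping.lookup t (w, [])"
proof -
  have "Poly_Mapping.lookup (id_counit t) w = lin (\<lambda>p. if p = (w, []) then 1 else 0) t"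
    unfolding id_counit_def lin_def lookup_sum
    by (intro sum.cong refl) (auto simp: counit_single lookup_single when_def)
  then show ?thesis by (simp add: lin_delta)
qed

lemma is_pf_Nil: "is_pf []" unfolding is_pf_iff_pf_count pf_count_def by simp

text \<open>The cut points 0 and |f| give the terms 1 \<otimes> f and f \<otimes> 1 of Delta f.\<close>
lemma lookup_cop_b_left: assumes "is_pf f"
  shows "Poly_Mapping.lookup (cop_b f :: (nat list \<times> nat list) \<Rightarrow>\<^sub>0 'a::comm_ring_1) ([], w) = (if f = w then 1 else 0)"
proof -
  have v: "\<forall>y\<in>set f. 1 \<le> y" using pf_vals[OF assms] by auto
  have low: "lowpart 0 f = []" unfolding lowpart_def using v by (auto simp: filter_empty_conv)
  have high: "highpart 0 f = f" unfolding highpart_def using v by (auto intro!: filter_True)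
  have J: "0 \<in> cuts f" unfolding cuts_def using low high assms is_pf_Nil by simp
  show ?thesis unfolding lookup_cop_b using J low high by auto
qed

lemma lookup_cop_b_right: assumes "is_pf f"
  shows "Poly_Mapping.lookup (cop_b f :: (nat list \<times> nat list) \<Rightarrow>\<^sub>0 'a::comm_ring_1) (w, []) = (if f = w then 1 else 0)"
proof (cases "f = w")
  case True
  have v: "\<forall>y\<in>set f. y \<le> length f" using pf_vals[OF assms] by auto
  have high: "highpart (length f) f = []" unfolding highpart_Nil_iff using v .
  have low: "lowpart (length f) f = f" using highpart_Nil_lowpart[OF high] .
  have J: "length f \<in> cuts f" unfolding cuts_def using low high assms is_pf_Nil by simp
  show ?thesis unfolding lookup_cop_b using True J low high by simp
next
  case False
  have "\<not> (lowpart (length w) f = w \<and> highpart (length w) f = [])"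
    using highpart_Nil_lowpart[of "length w" f] False by auto
  then show ?thesis unfolding lookup_cop_b using False by auto
qed

lemma PQSplus_keys: "x \<in> PQSplus \<Longrightarrow> f \<in> Poly_Mapping.keys x \<Longrightarrow> is_pf f"
  unfolding PQSplus_def by auto

lemma counit_id_Cop: "x \<in> PQSplus \<Longrightarrow> counit_id (Cop x) = (x :: nat list \<Rightarrow>\<^sub>0 'a::comm_ring_1)"
proof (rule poly_mapping_eqI)
  fix w assume x: "x \<in> PQSplus"
  have "Poly_Mapping.lookup (counit_id (Cop x)) w = lin (\<lambda>f. Poly_Mapping.lookup (cop_b f) ([], w)) x"
    by (simp add: lookup_counit_id lookup_Cop)
  also have "\<dots> = lin (\<lambda>f. if f = w then 1 else 0) x"
    by (rule lin_cong) (simp add: lookup_cop_b_left PQSplus_keys[OF x])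
  finally show "Poly_Mapping.lookup (counit_id (Cop x)) w = Poly_Mapping.lookup x w" by (simp add: lin_delta)
qed

lemma id_counit_Cop: "x \<in> PQSplus \<Longrightarrow> id_counit (Cop x) = (x :: nat list \<Rightarrow>\<^sub>0 'a::comm_ring_1)"
proof (rule poly_mapping_eqI)
  fix w assume x: "x \<in> PQSplus"
  have "Poly_Mapping.lookup (id_counit (Cop x)) w = lin (\<lambda>f. Poly_Mapping.lookup (cop_b f) (w, [])) x"
    by (simp add: lookup_id_counit lookup_Cop)
  also have "\<dots> = lin (\<lambda>f. if f = w then 1 else 0) x"
    by (rule lin_cong) (simp add: lookup_cop_b_right PQSplus_keys[OF x])
  finally show "Poly_Mapping.lookup (id_counit (Cop x)) w = Poly_Mapping.lookup x w" by (simp add: lin_delta)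
qed

lemma Cop_TensPlus: assumes x: "x \<in> PQSplus" shows "(Cop x :: (nat list \<times> nat list) \<Rightarrow>\<^sub>0 'a::comm_ring_1) \<in> TensPlus"
  unfolding TensPlus_def
proof (intro CollectI subsetI)
  fix p assume "p \<in> Poly_Mapping.keys (Cop x :: (nat list \<times> nat list) \<Rightarrow>\<^sub>0 'a)"
  then have "lin (\<lambda>f. Poly_Mapping.lookup (cop_b f :: (nat list \<times> nat list) \<Rightarrow>\<^sub>0 'a) p) x \<noteq> 0"
    by (simp add: in_keys_iff lookup_Cop)
  then obtain f where "Poly_Mapping.lookup (cop_b f :: (nat list \<times> nat list) \<Rightarrow>\<^sub>0 'a) p \<noteq> 0"
    unfolding lin_def by (metis (no_types, lifting) mult_zero_right sum.neutral)
  moreover obtain a b where p: "p = (a, b)" by (cases p)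
  ultimately have "length a \<in> cuts f \<and> lowpart (length a) f = a \<and> highpart (length a) f = b"
    by (simp add: lookup_cop_b split: if_splits)
  then have "is_pf a" "is_pf b" unfolding cuts_def by auto
  then show "case p of (f, g) \<Rightarrow> is_pf f \<and> is_pf g" using p by simp
qed

lemma Cop_one: "Cop (Poly_Mapping.single [] 1) = Poly_Mapping.single ([], []) (1::'a::comm_ring_1)"
proof (rule poly_mapping_eqI)
  fix p
  show "Poly_Mapping.lookup (Cop (Poly_Mapping.single [] 1)) p = Poly_Mapping.lookup (Poly_Mapping.single ([], []) (1::'a)) p"
    unfolding lookup_Cop lin_single by (simp add: cop_b_def)
qed

theorem proposition3p1:
  fixes q :: "'a::field"
  shows "q_tridendriform q PQS (Prec q) (Dot q) (Succ q) \<and> q_tridendriform_bialgebra q"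
proof -
  have tridendriform: "q_tridendriform q PQS (Prec q) (Dot q) (Succ q)"
    by (rule q_tridendriform_PQS)
  moreover have "q_tridendriform_bialgebra q"
    unfolding q_tridendriform_bialgebra_def
    using tridendriform Cop_TensPlus Cop_one counit_id_Cop id_counit_Cop compat_succ compat_dot compat_prec
    by blast
  ultimately show ?thesis ..
qed

end
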